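(* Let $n\ge1$, $d\ge0$, let $\lambda$ be a partition and $\beta\in\mathsf{B}_n$ with $\bm{l}(\lambda)\le n$, $\bm{l}(\beta)\le n$ and $|\lambda|+|\beta|=d$, and let $\alpha$ be a composition of $d$ with at most $n$ parts. If $\bm\lambda(\alpha)$ is not dominated by $\bm\lambda(\phi(\lambda,\beta))$, then $C^{\alpha}_{\lambda,\beta}=0$.
   Context: Let $\mathbf{x}=\{x_1,\dots,x_n\}$. A composition is a finite sequence of positive integers $\beta=(\beta_1,\dots,\beta_k)$, length $\bm{l}(\beta)=k$, size $|\beta|=\sum\beta_i$; a partition is a weakly decreasing composition; $\bm\lambda(\alpha)$ is the partition obtained by sorting the parts of $\alpha$ decreasingly. A partition $\lambda$ dominates $\mu$ if $\sum_{i=1}^k\lambda_i\ge\sum_{i=1}^k\mu_i$ for all $k$. $s_\lambda(x_1,\dots,x_n)$ is the Schur polynomial. Composition tableaux: the diagram of $\alpha$ has $\alpha_i$ cells in row $i$ (from the top, cells $(i,j)$ in matrix notation); a composition tableau of shape $\alpha$ is a filling $T$ by positive integers with (CT1) rows weakly decreasing left to right; (CT2) leftmost column strictly increasing top to bottom; (CT3) for cells $(i,k),(j,k)$ with $i<j$: if $\alpha_i\ge\alpha_j$ (and $k\ge2$) then $T(j,k)<T(i,k)$ or $T(i,k-1)<T(j,k)$; if $\alpha_i<\alpha_j$ then $T(j,k)<T(i,k)$ or $T(i,k)<T(j,k+1)$. The quasisymmetric Schur polynomial is $\mathcal{S}_\alpha(x_1,\dots,x_n)=\sum_T\prod_i x_i^{\#\{\text{entries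 }=i\}}$ over composition tableaux of shape $\alpha$ with entries in $\{1,\dots,n\}$; the $\mathcal{S}_\alpha$ with $\bm{l}(\alpha)\le n$ form a basis of the ring $\mathit{QSym}_n$ of quasisymmetric polynomials in $\mathbf{x}$. $C^{\alpha}_{\lambda,\beta}$ denotes the coefficient of $\mathcal{S}_\alpha$ in the expansion of $s_\lambda\,\mathcal{S}_\beta$ in this basis. A composition $\alpha$ is inverting if for each $i$ with $1<i\le\max_j\alpha_j$ there exist $s<t$ with $\alpha_s=i$, $\alpha_t=i-1$. Writing uniquely $\alpha=\gamma\,k^{i_k}\cdots1^{i_1}$ ($i_j\ge1$, $\gamma$ containing none of $1,\dots,k$, $k\ge0$ maximal), $\alpha$ is pure if $k$ is even. $\mathsf{B}_n$ is the set of pure and inverting compositions of length at most $n$. The map $\phi$: given $\lambda,\beta$ as in the claim, if $\bm{l}(\lambda)>\bm{l}(\beta)$ append $\bm{l}(\lambda)-\bm{l}(\beta)$ zeros after the last part of $\beta$; then for $1\le i\le\bm{l}(\lambda)$ add $\lambda_i$ to the $i$-th largest part of the padded $\beta$, where parts are compared by value and if $\beta_j=\beta_k$ with $j<k$ then $\beta_j$ is considered smaller. The result is $\phi(\lambda,\beta)$. *)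

theory Defs
  imports Main "HOL-Library.Poly_Mapping"
begin

(* Polynomials: (nat \<Rightarrow>\<^sub>0 nat) \<Rightarrow>\<^sub>0 int, a monomial being an exponent vector
   indexed by the variable number (variables x_1,...,x_n have indices 1..n). *)
type_synonym ipoly = "(nat \<Rightarrow>\<^sub>0 nat) \<Rightarrow>\<^sub>0 int"

definition is_comp :: "nat list \<Rightarrow> bool" where
  "is_comp \<alpha> \<longleftrightarrow> (\<forall>x\<in>set \<alpha>. 0 < x)"

definition is_partition :: "nat list \<Rightarrow> bool" where
  "is_partition lam \<longleftrightarrow> is_comp lam \<and> sorted_wrt (\<ge>) lam"

definition partition_of :: "nat list \<Rightarrow> nat list" where
  "partition_of \<alpha> = rev (sort \<alpha>)"

definition dominates :: "nat list \<Rightarrow> nat list \<Rightarrow> bool" where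
  "dominates lam mu \<longleftrightarrow> (\<forall>k. sum_list (take k mu) \<le> sum_list (take k lam))"

definition inverting :: "nat list \<Rightarrow> bool" where
  "inverting \<alpha> \<longleftrightarrow> (\<forall>i. 1 < i \<and> (\<exists>j<length \<alpha>. i \<le> \<alpha> ! j) \<longrightarrow>
      (\<exists>s t. s < t \<and> t < length \<alpha> \<and> \<alpha> ! s = i \<and> \<alpha> ! t = i - 1))"

definition stair_suffix :: "nat list \<Rightarrow> nat \<Rightarrow> bool" where
  "stair_suffix \<alpha> k \<longleftrightarrow> (\<exists>\<gamma> (m::nat \<Rightarrow> nat).
      (\<forall>j\<in>{1..k}. 0 < m j) \<and>
      \<alpha> = \<gamma> @ concat (map (\<lambda>j. replicate (m j) j) (rev [1..<Suc k])) \<and>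
      (\<forall>j\<in>{1..k}. j \<notin> set \<gamma>))"

definition stair_index :: "nat list \<Rightarrow> nat" where
  "stair_index \<alpha> = (GREATEST k. stair_suffix \<alpha> k)"

definition pure :: "nat list \<Rightarrow> bool" where
  "pure \<alpha> \<longleftrightarrow> even (stair_index \<alpha>)"

definition Bset :: "nat \<Rightarrow> nat list set" where
  "Bset n = {\<beta>. is_comp \<beta> \<and> pure \<beta> \<and> inverting \<beta> \<and> length \<beta> \<le> n}"

(* the map phi: pad beta with zeros, then add lam_i to the i-th largest part,
   where among equal parts the one with the larger index counts as larger
   (sort_key is stable, so it sorts indices increasingly by (value, index)) *)
definition phi :: "nat list \<Rightarrow> nat list \<Rightarrow> nat list" where
  "phi lam \<beta> = (let b = \<beta> @ replicate (length lam - length \<beta>) 0;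
                   ord = rev (sort_key (\<lambda>j. b ! j) [0..<length b])
               in foldl (\<lambda>c i. c[ord ! i := c ! (ord ! i) + lam ! i]) b [0..<length lam])"

(* cells (row, column), 0-indexed *)
definition cells :: "nat list \<Rightarrow> (nat \<times> nat) set" where
  "cells \<alpha> = {(i, j). i < length \<alpha> \<and> j < \<alpha> ! i}"

definition filling :: "nat \<Rightarrow> nat list \<Rightarrow> (nat \<times> nat \<Rightarrow> nat) \<Rightarrow> bool" where
  "filling n \<alpha> T \<longleftrightarrow> (\<forall>c. c \<notin> cells \<alpha> \<longrightarrow> T c = 0) \<and> (\<forall>c\<in>cells \<alpha>. T c \<in> {1..n})"

definition comp_tableau :: "nat \<Rightarrow> nat list \<Rightarrow> (nat \<times> nat \<Rightarrow> nat) \<Rightarrow> bool" where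
  "comp_tableau n \<alpha> T \<longleftrightarrow> filling n \<alpha> T \<and>
     (\<forall>i j. i < length \<alpha> \<and> Suc j < \<alpha> ! i \<longrightarrow> T (i, Suc j) \<le> T (i, j)) \<and>
     (\<forall>i i'. i < i' \<and> i' < length \<alpha> \<longrightarrow> T (i, 0) < T (i', 0)) \<and>
     (\<forall>i j k. i < j \<and> (i, k) \<in> cells \<alpha> \<and> (j, k) \<in> cells \<alpha> \<longrightarrow>
        (\<alpha> ! j \<le> \<alpha> ! i \<and> 1 \<le> k \<longrightarrow> T (j, k) < T (i, k) \<or> T (i, k - 1) < T (j, k)) \<and>
        (\<alpha> ! i < \<alpha> ! j \<longrightarrow> T (j, k) < T (i, k) \<or> T (i, k) < T (j, Suc k)))"

definition ssyt :: "nat \<Rightarrow> nat list \<Rightarrow> (nat \<times> nat \<Rightarrow> nat) \<Rightarrow> bool" where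
  "ssyt n lam T \<longleftrightarrow> filling n lam T \<and>
     (\<forall>i j. i < length lam \<and> Suc j < lam ! i \<longrightarrow> T (i, j) \<le> T (i, Suc j)) \<and>
     (\<forall>i j. (i, j) \<in> cells lam \<and> (Suc i, j) \<in> cells lam \<longrightarrow> T (i, j) < T (Suc i, j))"

definition tab_monomial :: "nat list \<Rightarrow> (nat \<times> nat \<Rightarrow> nat) \<Rightarrow> ipoly" where
  "tab_monomial \<alpha> T = Poly_Mapping.single (\<Sum>c\<in>cells \<alpha>. Poly_Mapping.single (T c) 1) 1"

definition qschur :: "nat \<Rightarrow> nat list \<Rightarrow> ipoly" where
  "qschur n \<alpha> = (\<Sum>T\<in>{T. comp_tableau n \<alpha> T}. tab_monomial \<alpha> T)"

definition schur :: "nat \<Rightarrow> nat list \<Rightarrow> ipoly" where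
  "schur n lam = (\<Sum>T\<in>{T. ssyt n lam T}. tab_monomial lam T)"

definition lr_coeff :: "nat \<Rightarrow> nat list \<Rightarrow> nat list \<Rightarrow> nat list \<Rightarrow> int" where
  "lr_coeff n lam \<beta> \<alpha> = (THE c :: nat list \<Rightarrow> int.
      finite {\<gamma>. c \<gamma> \<noteq> 0} \<and>
      (\<forall>\<gamma>. c \<gamma> \<noteq> 0 \<longrightarrow> is_comp \<gamma> \<and> length \<gamma> \<le> n) \<and>
      schur n lam * qschur n \<beta> = (\<Sum>\<gamma>\<in>{\<gamma>. c \<gamma> \<noteq> 0}. of_int (c \<gamma>) * qschur n \<gamma>)) \<alpha>"

end

theory Submission
  imports Defs "HOL-Library.Multiset"
begin

text \<open>Every monomial \<open>x\<^sup>e\<close> of \<open>s\<^sub>\<lambda> \<S>\<^sub>\<beta>\<close> comes from a pair of tableaux in which no value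
  repeats within a column. Counting cells column by column, the \<open>k\<close> largest exponents of \<open>e\<close>
  sum to at most \<open>\<lambda>\<^sub>1 + \<dots> + \<lambda>\<^sub>k\<close> plus the \<open>k\<close> largest parts of \<open>\<beta>\<close>, and this is at most the sum
  of the \<open>k\<close> largest parts of \<open>\<phi>(\<lambda>, \<beta>)\<close>. The product is quasisymmetric, and the basis is
  unitriangular for dominance: the monomials of \<open>\<S>\<^sub>\<alpha>\<close> have shapes dominated by \<open>\<alpha>\<close>, and
  \<open>x\<^sub>1\<^sup>\<alpha>\<^sub>1 \<cdots> x\<^sub>l\<^sup>\<alpha>\<^sub>l\<close> occurs with coefficient 1. Peeling off terms of maximal shape thus
  expands \<open>s\<^sub>\<lambda> \<S>\<^sub>\<beta>\<close> using only \<open>\<S>\<^sub>\<gamma>\<close> whose shape is dominated by \<open>\<phi>(\<lambda>, \<beta>)\<close>, and the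
  expansion is unique.\<close>

abbreviation lookup :: "('a \<Rightarrow>\<^sub>0 'b::zero) \<Rightarrow> 'a \<Rightarrow> 'b" where
  "lookup \<equiv> Poly_Mapping.lookup"

abbreviation keys :: "('a \<Rightarrow>\<^sub>0 'b::zero) \<Rightarrow> 'a set" where
  "keys \<equiv> Poly_Mapping.keys"

section \<open>Prefix sums of the decreasing rearrangement\<close>

lemma mset_partition_of [simp]: "mset (partition_of xs) = mset xs"
  by (simp add: partition_of_def)

lemma length_partition_of [simp]: "length (partition_of xs) = length xs"
  by (simp add: partition_of_def)

lemma set_partition_of [simp]: "set (partition_of xs) = set xs"
  by (simp add: partition_of_def)

lemma sorted_partition_of: "sorted_wrt (\<ge>) (partition_of xs)"
  by (simp add: partition_of_def sorted_wrt_rev)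

lemma partition_of_partition:
  assumes "is_partition lam"
  shows "partition_of lam = lam"
proof -
  have "sorted (rev lam)"
    using assms by (simp add: is_partition_def sorted_wrt_rev)
  then have "sort lam = rev lam"
    by (intro properties_for_sort) simp_all
  then show ?thesis
    by (simp add: partition_of_def)
qed

lemma is_comp_partition_of: "is_comp xs \<Longrightarrow> is_comp (partition_of xs)"
  by (simp add: is_comp_def)

text \<open>Among equal entries the later position comes first: this is the tie-breaking rule of phi.\<close>

definition decreasing_order :: "nat list \<Rightarrow> nat list" where
  "decreasing_order xs = rev (sort_key (nth xs) [0..<length xs])"

lemma distinct_decreasing_order: "distinct (decreasing_order xs)"
  by (simp add: decreasing_order_def)

lemma set_decreasing_order: "set (decreasing_order xs) = {..<length xs}"
  by (simp add: decreasing_order_def atLeast0LessThan)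

lemma length_decreasing_order: "length (decreasing_order xs) = length xs"
  by (simp add: decreasing_order_def)

lemma map_nth_decreasing_order: "map (nth xs) (decreasing_order xs) = partition_of xs"
proof -
  have "map (nth xs) (sort_key (nth xs) [0..<length xs]) = sort (map (nth xs) [0..<length xs])"
    by (rule properties_for_sort[symmetric]) (simp_all add: sorted_sort_key)
  then show ?thesis
    by (simp add: decreasing_order_def partition_of_def rev_map[symmetric] map_nth)
qed

lemma sum_mset_le_sum_take_sorted:
  fixes ys :: "nat list"
  assumes "sorted_wrt (\<ge>) ys" "M \<subseteq># mset ys" "size M \<le> k"
  shows "sum_mset M \<le> sum_list (take k ys)"
  using assms
proof (induction ys arbitrary: M k)
  case Nil
  then show ?case by simp
next
  case (Cons y ys)
  show ?case
  proof (cases k)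
    case 0
    then show ?thesis using Cons.prems by simp
  next
    case (Suc k')
    have sorted: "sorted_wrt (\<ge>) ys" and below_y: "\<forall>z\<in>set ys. z \<le> y"
      using Cons.prems(1) by auto
    show ?thesis
    proof (cases "y \<in># M")
      case True
      then obtain M' where M: "M = add_mset y M'" by (metis insert_DiffM)
      have "sum_mset M' \<le> sum_list (take k' ys)"
        using Cons.IH[OF sorted] Cons.prems(2,3) M Suc by simp
      then show ?thesis using M Suc by simp
    next
      case False
      have "M \<subseteq># mset ys" using Cons.prems(2) False
        by (simp add: inter_add_left1 subset_mset.inf.absorb_iff2)
      then have "sum_mset M \<le> sum_list (take k ys)" using Cons.IH[OF sorted] Cons.prems(3) by blast
      also have "\<dots> \<le> y + sum_list (take k' ys)"
        using below_y Suc by (cases "k' < length ys") (auto simp: take_Suc_conv_app_nth)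
      finally show ?thesis using Suc by simp
    qed
  qed
qed

lemma sum_nth_le_sum_take_partition_of:
  fixes xs :: "nat list"
  assumes "I \<subseteq> {..<length xs}" "card I \<le> k"
  shows "(\<Sum>i\<in>I. xs ! i) \<le> sum_list (take k (partition_of xs))"
proof -
  have "mset xs = mset (map (nth xs) [0..<length xs])"
    by (simp add: map_nth)
  then have "mset xs = image_mset (nth xs) (mset_set {..<length xs})"
    by (simp add: atLeast0LessThan)
  then have "image_mset (nth xs) (mset_set I) \<subseteq># mset (partition_of xs)"
    using assms(1) by (simp add: image_mset_subseteq_mono subset_imp_msubset_mset_set)
  moreover have "size (image_mset (nth xs) (mset_set I)) \<le> k" using assms(2) by simp
  ultimately show ?thesis
    using sum_mset_le_sum_take_sorted[OF sorted_partition_of]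
    by (simp add: sum_unfold_sum_mset)
qed

lemma sum_take_partition_of_attained:
  fixes xs :: "nat list"
  obtains I where "I \<subseteq> {..<length xs}" "card I \<le> k"
    "sum_list (take k (partition_of xs)) = (\<Sum>i\<in>I. xs ! i)"
proof
  let ?I = "set (take k (decreasing_order xs))"
  show "?I \<subseteq> {..<length xs}"
    using set_take_subset[of k "decreasing_order xs"] by (simp add: set_decreasing_order)
  show "card ?I \<le> k"
    using card_length[of "take k (decreasing_order xs)"] by simp
  have "sum_list (take k (partition_of xs)) = sum_list (map (nth xs) (take k (decreasing_order xs)))"
    by (simp add: take_map map_nth_decreasing_order[symmetric])
  also have "\<dots> = (\<Sum>i\<in>?I. xs ! i)"
    by (simp add: sum.distinct_set_conv_list distinct_decreasing_order)
  finally show "sum_list (take k (partition_of xs)) = (\<Sum>i\<in>?I. xs ! i)" .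
qed

section \<open>Dominance order\<close>

lemma dominates_refl: "dominates p p"
  by (simp add: dominates_def)

lemma dominates_trans: "dominates p q \<Longrightarrow> dominates q r \<Longrightarrow> dominates p r"
  unfolding dominates_def using order_trans by blast

lemma sum_take_Suc:
  "sum_list (take (Suc k) xs) = sum_list (take k xs) + (if k < length xs then xs ! k else (0::nat))"
  by (simp add: take_Suc_conv_app_nth)

lemma dominates_antisym:
  assumes "is_comp p" "is_comp q" "dominates p q" "dominates q p"
  shows "p = q"
proof -
  have eq: "sum_list (take k p) = sum_list (take k q)" for k
    using assms(3,4) unfolding dominates_def by (meson le_antisym)
  have entries: "(if k < length p then p ! k else 0) = (if k < length q then q ! k else 0)" for k
    using eq[of "Suc k"] eq[of k] by (simp add: sum_take_Suc)
  have pos: "k < length p \<Longrightarrow> 0 < p ! k" "k < length q \<Longrightarrow> 0 < q ! k" for k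
    using assms(1,2) by (auto simp: is_comp_def)
  have len: "length p = length q"
    using entries[of "length p"] entries[of "length q"] pos[of "length p"] pos[of "length q"]
    by (cases "length p < length q"; cases "length q < length p") auto
  show ?thesis
  proof (rule nth_equalityI)
    show "length p = length q" by (fact len)
    show "p ! i = q ! i" if "i < length p" for i
      using entries[of i] that len by simp
  qed
qed

lemma dominates_sum_list_le: "dominates p q \<Longrightarrow> sum_list q \<le> sum_list p"
  unfolding dominates_def
  by (metis append_take_drop_id take_all le_add1 order.trans sum_list_append nat_le_linear take_all_iff)

lemma length_le_sum_list: "is_comp q \<Longrightarrow> length q \<le> sum_list q"
  by (induction q) (auto simp: is_comp_def Suc_leI)

lemma finite_comps_sum_le: "finite {q. is_comp q \<and> sum_list q \<le> N}"
proof (rule finite_subset)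
  show "{q. is_comp q \<and> sum_list q \<le> N} \<subseteq> {xs. set xs \<subseteq> {0..N} \<and> length xs \<le> N}"
    using length_le_sum_list member_le_sum_list by fastforce
  show "finite {xs. set xs \<subseteq> {0..N} \<and> length xs \<le> N}"
    by (rule finite_lists_length_le) simp
qed

section \<open>Content of a filling\<close>

definition content :: "nat list \<Rightarrow> (nat \<times> nat \<Rightarrow> nat) \<Rightarrow> (nat \<Rightarrow>\<^sub>0 nat)" where
  "content \<alpha> T = (\<Sum>c\<in>cells \<alpha>. Poly_Mapping.single (T c) 1)"

lemma tab_monomial_content: "tab_monomial \<alpha> T = Poly_Mapping.single (content \<alpha> T) 1"
  by (simp add: tab_monomial_def content_def)

lemma cells_Sigma: "cells \<alpha> = Sigma {..<length \<alpha>} (\<lambda>i. {..<\<alpha> ! i})"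
  by (auto simp: cells_def)

lemma finite_cells [simp]: "finite (cells \<alpha>)"
  by (simp add: cells_Sigma)

lemma snd_cell_less_sum_list: "(i, j) \<in> cells \<alpha> \<Longrightarrow> j < sum_list \<alpha>"
  unfolding cells_def using elem_le_sum_list[of i \<alpha>] by auto

lemma lookup_content: "lookup (content \<alpha> T) v = card {c\<in>cells \<alpha>. T c = v}"
proof -
  have "lookup (content \<alpha> T) v = (\<Sum>c\<in>cells \<alpha>. if T c = v then 1 else 0)"
    unfolding content_def lookup_sum lookup_single when_def by (rule sum.cong) auto
  also have "\<dots> = card {c\<in>cells \<alpha>. T c = v}"
    by (simp add: sum.inter_filter[symmetric])
  finally show ?thesis .
qed

lemma keys_content: "keys (content \<alpha> T) = T ` cells \<alpha>"
proof -
  have "v \<in> keys (content \<alpha> T) \<longleftrightarrow> {c\<in>cells \<alpha>. T c = v} \<noteq> {}" for v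
    by (simp add: in_keys_iff lookup_content)
  then show ?thesis by (auto simp: image_iff)
qed

lemma keys_content_subset: "filling n \<alpha> T \<Longrightarrow> keys (content \<alpha> T) \<subseteq> {1..n}"
  by (auto simp: keys_content filling_def)

definition column_injective :: "nat list \<Rightarrow> (nat \<times> nat \<Rightarrow> nat) \<Rightarrow> bool" where
  "column_injective \<alpha> T \<longleftrightarrow>
     (\<forall>i j c. (i, c) \<in> cells \<alpha> \<longrightarrow> (j, c) \<in> cells \<alpha> \<longrightarrow> T (i, c) = T (j, c) \<longrightarrow> i = j)"

lemma column_injective_comp_tableau:
  assumes "comp_tableau n \<alpha> T"
  shows "column_injective \<alpha> T"
proof -
  have row: "\<And>i j. i < length \<alpha> \<Longrightarrow> Suc j < \<alpha> ! i \<Longrightarrow> T (i, Suc j) \<le> T (i, j)"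
    and first_col: "\<And>i i'. i < i' \<Longrightarrow> i' < length \<alpha> \<Longrightarrow> T (i, 0) < T (i', 0)"
    and triple: "\<And>i j k. i < j \<Longrightarrow> (i, k) \<in> cells \<alpha> \<Longrightarrow> (j, k) \<in> cells \<alpha> \<Longrightarrow>
        (\<alpha> ! j \<le> \<alpha> ! i \<and> 1 \<le> k \<longrightarrow> T (j, k) < T (i, k) \<or> T (i, k - 1) < T (j, k)) \<and>
        (\<alpha> ! i < \<alpha> ! j \<longrightarrow> T (j, k) < T (i, k) \<or> T (i, k) < T (j, Suc k))"
    using assms unfolding comp_tableau_def by blast+
  have "T (i, c) \<noteq> T (j, c)" if "i < j" "(i, c) \<in> cells \<alpha>" "(j, c) \<in> cells \<alpha>" for i j c
  proof (cases c)
    case 0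
    then show ?thesis using first_col[of i j] that by (auto simp: cells_def)
  next
    case (Suc c')
    show ?thesis
    proof (cases "\<alpha> ! j \<le> \<alpha> ! i")
      case True
      have "T (i, c) \<le> T (i, c')" using row[of i c'] that Suc by (auto simp: cells_def)
      then show ?thesis using triple[OF that] True Suc by auto
    next
      case False
      have "T (j, Suc c) \<le> T (j, c)" using row[of j c] that False by (auto simp: cells_def)
      then show ?thesis using triple[OF that] False by auto
    qed
  qed
  then show ?thesis
    unfolding column_injective_def by (metis linorder_neqE_nat)
qed

lemma ssyt_column_strict:
  assumes "is_partition lam" "ssyt n lam T" "i < j" "(j, c) \<in> cells lam"
  shows "T (i, c) < T (j, c)"
  using assms(3,4)
proof (induction j)
  case 0
  then show ?case by simp
next
  case (Suc j)
  have "sorted_wrt (\<ge>) lam"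
    using assms(1) by (simp add: is_partition_def)
  then have "lam ! Suc j \<le> lam ! j"
    using sorted_wrt_nth_less[of "(\<ge>)" lam j "Suc j"] Suc.prems(2) by (simp add: cells_def)
  then have "(j, c) \<in> cells lam"
    using Suc.prems(2) by (auto simp: cells_def)
  then have "T (j, c) < T (Suc j, c)"
    using assms(2) Suc.prems(2) by (simp add: ssyt_def)
  then show ?case
    using Suc.IH[OF _ \<open>(j, c) \<in> cells lam\<close>] Suc.prems(1) by (cases "i = j") auto
qed

lemma column_injective_ssyt:
  assumes "is_partition lam" "ssyt n lam T"
  shows "column_injective lam T"
  unfolding column_injective_def
proof (intro allI impI)
  fix i j c
  assume "(i, c) \<in> cells lam" "(j, c) \<in> cells lam" "T (i, c) = T (j, c)"
  then show "i = j"
    using ssyt_column_strict[OF assms, of i j c] ssyt_column_strict[OF assms, of j i c]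
    by (cases i j rule: linorder_cases) auto
qed

definition col_height :: "nat list \<Rightarrow> nat \<Rightarrow> nat" where
  "col_height \<alpha> c = card {i. i < length \<alpha> \<and> c < \<alpha> ! i}"

lemma col_height_eq_length_filter: "col_height \<alpha> c = length (filter ((<) c) (partition_of \<alpha>))"
proof -
  have "col_height \<alpha> c = length (filter ((<) c) \<alpha>)"
    by (simp add: col_height_def length_filter_conv_card)
  also have "\<dots> = length (filter ((<) c) (partition_of \<alpha>))"
    by (metis mset_filter mset_partition_of size_mset)
  finally show ?thesis .
qed

text \<open>Counting the cells of the \<open>k\<close> longest rows column by column (conjugate partition).\<close>

lemma sum_min_length_filter_less:
  fixes ys :: "nat list"
  assumes "sorted_wrt (\<ge>) ys" "\<forall>y\<in>set ys. y \<le> M"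
  shows "(\<Sum>c<M. min k (length (filter ((<) c) ys))) = sum_list (take k ys)"
  using assms
proof (induction ys arbitrary: k)
  case Nil
  then show ?case by simp
next
  case (Cons y ys)
  have sorted: "sorted_wrt (\<ge>) ys" and below_y: "\<forall>z\<in>set ys. z \<le> y"
    and "y \<le> M" and bounded: "\<forall>z\<in>set ys. z \<le> M"
    using Cons.prems by auto
  show ?case
  proof (cases k)
    case 0
    then show ?thesis by simp
  next
    case (Suc k')
    have min_cons: "min k (length (filter ((<) c) (y # ys))) =
        (if c < y then 1 else 0) + min k' (length (filter ((<) c) ys))" for c
    proof (cases "c < y")
      case False
      then have "filter ((<) c) ys = []" using below_y by (auto simp: filter_empty_conv)
      then show ?thesis using False by simp
    qed (use Suc in simp)
    have "(\<Sum>c<M. min k (length (filter ((<) c) (y # ys)))) =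
        (\<Sum>c<M. (if c < y then 1 else 0)) + (\<Sum>c<M. min k' (length (filter ((<) c) ys)))"
      by (simp only: min_cons sum.distrib)
    also have "(\<Sum>c<M. (if c < y then 1 else 0::nat)) = y"
    proof -
      have "{c. c < M \<and> c < y} = {..<y}" using \<open>y \<le> M\<close> by auto
      then show ?thesis by (simp add: sum.If_cases[of "{..<M}"] Int_def)
    qed
    finally show ?thesis
      using Cons.IH[OF sorted bounded] Suc by simp
  qed
qed

lemma sum_min_col_height:
  assumes "sum_list \<alpha> \<le> M"
  shows "(\<Sum>c<M. min k (col_height \<alpha> c)) = sum_list (take k (partition_of \<alpha>))"
proof -
  have "\<forall>y\<in>set (partition_of \<alpha>). y \<le> M"
    using assms member_le_sum_list by fastforce
  then show ?thesis
    by (simp add: col_height_eq_length_filter sum_min_length_filter_less[OF sorted_partition_of])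
qed

lemma card_eq_sum_card_fibers:
  assumes "finite S" "finite B" "g ` S \<subseteq> B"
  shows "card S = (\<Sum>y\<in>B. card {x\<in>S. g x = y})"
  using sum.group[OF assms, of "\<lambda>_. 1::nat"] by simp

text \<open>A column-injective filling places each value at most once per column, so any \<open>k\<close>
  values occupy at most \<open>min k h\<close> cells of a column of height \<open>h\<close>.\<close>

lemma sum_lookup_content_le:
  assumes inj: "column_injective \<alpha> T" and K: "finite K" "card K \<le> k"
  shows "(\<Sum>v\<in>K. lookup (content \<alpha> T) v) \<le> sum_list (take k (partition_of \<alpha>))"
proof -
  define S where "S = {c\<in>cells \<alpha>. T c \<in> K}"
  have "finite S" by (simp add: S_def)
  have "(\<Sum>v\<in>K. lookup (content \<alpha> T) v) = (\<Sum>v\<in>K. card {c\<in>S. T c = v})"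
    by (rule sum.cong) (auto simp: lookup_content S_def intro!: arg_cong[where f=card])
  also have "\<dots> = card S"
    by (rule card_eq_sum_card_fibers[symmetric]) (auto simp: S_def K)
  also have "\<dots> = (\<Sum>col<sum_list \<alpha>. card {c\<in>S. snd c = col})"
    by (rule card_eq_sum_card_fibers) (auto simp: S_def dest: snd_cell_less_sum_list)
  also have "\<dots> \<le> (\<Sum>col<sum_list \<alpha>. min k (col_height \<alpha> col))"
  proof (rule sum_mono)
    fix col
    define C where "C = {c\<in>S. snd c = col}"
    define H where "H = {i. i < length \<alpha> \<and> col < \<alpha> ! i}"
    have "card C \<le> card ((\<lambda>i. (i, col)) ` H)"
      by (rule card_mono) (auto simp: C_def S_def H_def cells_def)
    also have "\<dots> \<le> card H"
      by (rule card_image_le) (simp add: H_def)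
    finally have "card C \<le> col_height \<alpha> col"
      by (simp add: H_def col_height_def)
    moreover have "inj_on T C" "T ` C \<subseteq> K"
      using inj unfolding inj_on_def C_def S_def column_injective_def by auto
    then have "card C \<le> k"
      using card_inj_on_le[of T C K] K by simp
    ultimately show "card {c\<in>S. snd c = col} \<le> min k (col_height \<alpha> col)"
      by (simp add: C_def)
  qed
  also have "\<dots> = sum_list (take k (partition_of \<alpha>))"
    by (simp add: sum_min_col_height)
  finally show ?thesis .
qed

section \<open>Flattening of exponent vectors\<close>

definition flat :: "(nat \<Rightarrow>\<^sub>0 nat) \<Rightarrow> nat list" where
  "flat e = map (lookup e) (sorted_list_of_set (keys e))"

lemma is_comp_flat: "is_comp (flat e)"
  by (auto simp: is_comp_def flat_def in_keys_iff)

lemma length_flat: "length (flat e) = card (keys e)"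
  by (simp add: flat_def)

lemma length_flat_le: "keys e \<subseteq> {1..n} \<Longrightarrow> length (flat e) \<le> n"
  using card_mono[of "{1..n}" "keys e"] by (simp add: length_flat)

lemma mset_flat: "mset (flat e) = image_mset (lookup e) (mset_set (keys e))"
  by (simp add: flat_def)
    (metis finite_keys sorted_list_of_set.distinct_sorted_key_list_of_set mset_set_set
      sorted_list_of_set.set_sorted_key_list_of_set)

lemma length_filter_flat: "length (filter P (flat e)) = card {v\<in>keys e. P (lookup e v)}"
proof -
  have "length (filter P (flat e)) = size (filter_mset P (mset (flat e)))"
    by (metis mset_filter size_mset)
  also have "\<dots> = card {v\<in>keys e. P (lookup e v)}"
    by (simp add: mset_flat filter_mset_image_mset filter_mset_mset_set)
  finally show ?thesis .
qed

lemma sum_take_partition_of_flat: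
  obtains K where "K \<subseteq> keys e" "card K \<le> k"
    "sum_list (take k (partition_of (flat e))) = (\<Sum>v\<in>K. lookup e v)"
proof -
  define s where "s = sorted_list_of_set (keys e)"
  obtain I where I: "I \<subseteq> {..<length (flat e)}" "card I \<le> k"
      "sum_list (take k (partition_of (flat e))) = (\<Sum>i\<in>I. flat e ! i)"
    using sum_take_partition_of_attained by blast
  have I_s: "\<forall>i\<in>I. i < length s" using I(1) by (auto simp: flat_def s_def)
  have inj: "inj_on (nth s) I"
    using I_s by (simp add: inj_on_nth s_def)
  have "(\<Sum>i\<in>I. flat e ! i) = (\<Sum>i\<in>I. lookup e (s ! i))"
    using I_s by (auto simp: flat_def s_def intro!: sum.cong)
  also have "\<dots> = (\<Sum>v\<in>nth s ` I. lookup e v)"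
    by (simp add: sum.reindex[OF inj])
  finally have "sum_list (take k (partition_of (flat e))) = (\<Sum>v\<in>nth s ` I. lookup e v)"
    using I(3) by simp
  moreover have "card (nth s ` I) \<le> k"
    using I(2) card_image_le[of I "nth s"] finite_subset[OF I(1)] by simp
  moreover have "nth s ` I \<subseteq> keys e"
  proof -
    have "nth s ` I \<subseteq> set s" using I_s by auto
    then show ?thesis by (simp add: s_def)
  qed
  ultimately show ?thesis using that by blast
qed

lemma dominates_flat_content:
  assumes "column_injective \<alpha> T"
  shows "dominates (partition_of \<alpha>) (partition_of (flat (content \<alpha> T)))"
  unfolding dominates_def
proof
  fix k
  obtain K where K: "K \<subseteq> keys (content \<alpha> T)" "card K \<le> k"
    "sum_list (take k (partition_of (flat (content \<alpha> T)))) = (\<Sum>v\<in>K. lookup (content \<alpha> T) v)"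
    by (rule sum_take_partition_of_flat)
  then show "sum_list (take k (partition_of (flat (content \<alpha> T)))) \<le> sum_list (take k (partition_of \<alpha>))"
    using sum_lookup_content_le[OF assms finite_subset[OF K(1) finite_keys]] by simp
qed

lemma sum_take_flat_content_add_le:
  assumes "column_injective lam T1" "column_injective \<beta> T2"
  shows "sum_list (take k (partition_of (flat (content lam T1 + content \<beta> T2)))) \<le>
     sum_list (take k (partition_of lam)) + sum_list (take k (partition_of \<beta>))"
proof -
  obtain K where K: "K \<subseteq> keys (content lam T1 + content \<beta> T2)" "card K \<le> k"
    "sum_list (take k (partition_of (flat (content lam T1 + content \<beta> T2)))) =
       (\<Sum>v\<in>K. lookup (content lam T1 + content \<beta> T2) v)"
    by (rule sum_take_partition_of_flat)
  have "finite K" using K(1) finite_keys by (rule finite_subset)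
  then show ?thesis
    using K sum_lookup_content_le[OF assms(1)] sum_lookup_content_le[OF assms(2)]
    by (simp add: lookup_add sum.distrib add_mono)
qed

section \<open>The map phi\<close>

lemma nth_foldl_add_at:
  fixes b lam ord :: "nat list"
  assumes "m \<le> length lam" "m \<le> length ord" "set ord \<subseteq> {..<length b}"
  defines "r \<equiv> foldl (\<lambda>c i. c[ord ! i := c ! (ord ! i) + lam ! i]) b [0..<m]"
  shows "length r = length b \<and>
    (\<forall>j<length b. r ! j = b ! j + (\<Sum>i<m. if ord ! i = j then lam ! i else 0))"
  using assms(1,2) unfolding r_def
proof (induction m)
  case 0
  then show ?case by simp
next
  case (Suc m)
  have "ord ! m \<in> set ord"
    using Suc.prems(2) by simp
  then have "ord ! m < length b"
    using assms(3) by auto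
  then show ?case using Suc by (auto simp: nth_list_update)
qed

lemma phi_eq_foldl:
  fixes lam \<beta> :: "nat list"
  defines "b \<equiv> \<beta> @ replicate (length lam - length \<beta>) 0"
  shows "phi lam \<beta> = foldl (\<lambda>c i. c[decreasing_order b ! i := c ! (decreasing_order b ! i) + lam ! i])
    b [0..<length lam]"
  by (simp add: phi_def b_def decreasing_order_def Let_def)

lemma length_phi: "length (phi lam \<beta>) = length (\<beta> @ replicate (length lam - length \<beta>) 0)"
  using nth_foldl_add_at[of "length lam" lam "decreasing_order (\<beta> @ replicate (length lam - length \<beta>) 0)"]
  by (simp add: phi_eq_foldl length_decreasing_order set_decreasing_order)

lemma nth_phi_decreasing_order:
  fixes lam \<beta> :: "nat list"
  defines "b \<equiv> \<beta> @ replicate (length lam - length \<beta>) 0"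
  assumes "i < length b"
  shows "phi lam \<beta> ! (decreasing_order b ! i) =
    partition_of b ! i + (if i < length lam then lam ! i else 0)"
proof -
  define ord where "ord = decreasing_order b"
  have len: "length lam \<le> length b" "length ord = length b"
    by (auto simp: b_def ord_def length_decreasing_order)
  have phi: "phi lam \<beta> = foldl (\<lambda>c i. c[ord ! i := c ! (ord ! i) + lam ! i]) b [0..<length lam]"
    unfolding ord_def b_def by (rule phi_eq_foldl)
  have "ord ! i' = ord ! i \<longleftrightarrow> i' = i" if "i' < length lam" for i'
    using that assms(2) len distinct_decreasing_order[of b]
    by (simp add: ord_def nth_eq_iff_index_eq)
  then have "(\<Sum>i'<length lam. if ord ! i' = ord ! i then lam ! i' else 0) =
      (\<Sum>i'<length lam. if i' = i then lam ! i' else 0)"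
    by (intro sum.cong) auto
  also have "\<dots> = (if i < length lam then lam ! i else 0)"
    by simp
  finally have sum_eq: "(\<Sum>i'<length lam. if ord ! i' = ord ! i then lam ! i' else 0) =
      (if i < length lam then lam ! i else 0)" .
  moreover have "ord ! i < length b"
    using assms(2) len set_decreasing_order[of b] nth_mem[of i ord] by (auto simp: ord_def)
  moreover have "partition_of b ! i = map (nth b) ord ! i"
    by (simp add: ord_def map_nth_decreasing_order)
  then have "b ! (ord ! i) = partition_of b ! i"
    using assms(2) len by simp
  moreover have "phi lam \<beta> ! (ord ! i) =
      b ! (ord ! i) + (\<Sum>i'<length lam. if ord ! i' = ord ! i then lam ! i' else 0)"
    using nth_foldl_add_at[of "length lam" lam ord b] \<open>ord ! i < length b\<close> len
    by (simp add: phi ord_def set_decreasing_order)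
  ultimately show ?thesis
    by (simp add: ord_def)
qed

lemma sum_list_take_eq_sum_nth: "sum_list (take k xs) = (\<Sum>i<min k (length xs). (xs::nat list) ! i)"
  by (simp add: sum_list_sum_nth atLeast0LessThan min.commute)

lemma sum_take_partition_of_append_mono:
  fixes xs ys :: "nat list"
  shows "sum_list (take k (partition_of xs)) \<le> sum_list (take k (partition_of (xs @ ys)))"
proof -
  obtain I where I: "I \<subseteq> {..<length xs}" "card I \<le> k"
    "sum_list (take k (partition_of xs)) = (\<Sum>i\<in>I. xs ! i)"
    by (rule sum_take_partition_of_attained)
  have "(\<Sum>i\<in>I. xs ! i) = (\<Sum>i\<in>I. (xs @ ys) ! i)"
    using I(1) by (auto simp: nth_append intro!: sum.cong)
  also have "\<dots> \<le> sum_list (take k (partition_of (xs @ ys)))"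
    using I(1,2) by (intro sum_nth_le_sum_take_partition_of) auto
  finally show ?thesis using I(3) by simp
qed

lemma sum_take_phi_ge:
  fixes lam \<beta> :: "nat list"
  shows "sum_list (take k lam) + sum_list (take k (partition_of \<beta>)) \<le>
    sum_list (take k (partition_of (phi lam \<beta>)))"
proof -
  define b where "b = \<beta> @ replicate (length lam - length \<beta>) 0"
  define ord where "ord = decreasing_order b"
  define k' where "k' = min k (length b)"
  have len: "length lam \<le> length b" "length ord = length b" "length (phi lam \<beta>) = length b"
    by (auto simp: b_def ord_def length_decreasing_order length_phi)
  have inj: "inj_on (nth ord) {..<k'}"
    using distinct_decreasing_order[of b] len
    by (auto simp: inj_on_def k'_def ord_def nth_eq_iff_index_eq)
  have "nth ord ` {..<k'} \<subseteq> set ord"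
    using len by (auto simp: k'_def)
  then have I: "nth ord ` {..<k'} \<subseteq> {..<length (phi lam \<beta>)}"
    using len by (simp add: ord_def set_decreasing_order)
  have card_I: "card (nth ord ` {..<k'}) \<le> k"
    using card_image[OF inj] by (simp add: k'_def)
  have "(\<Sum>i<k'. if i < length lam then lam ! i else 0) = sum_list (take k lam)"
  proof -
    have "{..<k'} \<inter> {i. i < length lam} = {..<min k (length lam)}"
      using len by (auto simp: k'_def)
    then show ?thesis
      by (simp add: sum.If_cases sum_list_take_eq_sum_nth)
  qed
  moreover have "(\<Sum>j\<in>nth ord ` {..<k'}. phi lam \<beta> ! j) = (\<Sum>i<k'. phi lam \<beta> ! (ord ! i))"
    by (simp add: sum.reindex[OF inj])
  moreover have "\<dots> = (\<Sum>i<k'. partition_of b ! i + (if i < length lam then lam ! i else 0))"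
  proof (rule sum.cong)
    fix i assume "i \<in> {..<k'}"
    then show "phi lam \<beta> ! (ord ! i) = partition_of b ! i + (if i < length lam then lam ! i else 0)"
      using nth_phi_decreasing_order[of i \<beta> lam] by (simp add: k'_def b_def ord_def)
  qed simp
  ultimately have "(\<Sum>j\<in>nth ord ` {..<k'}. phi lam \<beta> ! j) =
      sum_list (take k (partition_of b)) + sum_list (take k lam)"
    by (simp add: sum.distrib sum_list_take_eq_sum_nth k'_def)
  moreover have "sum_list (take k (partition_of \<beta>)) \<le> sum_list (take k (partition_of b))"
    by (simp add: b_def sum_take_partition_of_append_mono)
  moreover have "(\<Sum>j\<in>nth ord ` {..<k'}. phi lam \<beta> ! j) \<le> sum_list (take k (partition_of (phi lam \<beta>)))"
    using I card_I by (rule sum_nth_le_sum_take_partition_of)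
  ultimately show ?thesis by simp
qed

section \<open>Composition tableaux whose content rearranges their shape\<close>

lemma sum_card_filter_swap:
  assumes "finite V" "finite C"
  shows "(\<Sum>v\<in>V. card {c\<in>C. P v c}) = (\<Sum>c\<in>C. card {v\<in>V. P v c})"
proof -
  have card_filter: "card {x\<in>A. Q x} = (\<Sum>x\<in>A. if Q x then 1 else 0)" if "finite A" for A and Q :: "'c \<Rightarrow> bool"
    using that by (simp add: sum.inter_filter[symmetric])
  show ?thesis
    using assms by (simp add: card_filter sum.swap[of _ V C])
qed

lemma card_less_less: "card {c. c < m \<and> c < a} = min a (m::nat)"
proof -
  have "{c. c < m \<and> c < a} = {..<min a m}" by auto
  then show ?thesis by simp
qed

text \<open>If the content of a composition tableau is a rearrangement of its shape, then a value
  \<open>v\<close> of multiplicity \<open>m\<close> occupies exactly the first \<open>m\<close> columns (double counting against the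
  column heights); by induction on the column, the values of column \<open>c + 1\<close> are then first-column
  entries of rows of length \<open>> c + 1\<close>, and a counting argument makes every row constant.\<close>

context
  fixes n :: nat and \<alpha> :: "nat list" and T :: "nat \<times> nat \<Rightarrow> nat"
  assumes tableau: "comp_tableau n \<alpha> T" and comp: "is_comp \<alpha>"
    and content_perm: "mset (flat (content \<alpha> T)) = mset \<alpha>"
begin

definition column_values :: "nat \<Rightarrow> nat set" where
  "column_values c = T ` {x\<in>cells \<alpha>. snd x = c}"

lemma column_values_subset_keys: "column_values c \<subseteq> keys (content \<alpha> T)"
  by (auto simp: column_values_def keys_content)

lemma card_column_values: "card (column_values c) = col_height \<alpha> c"
proof -
  have "{x\<in>cells \<alpha>. snd x = c} = (\<lambda>i. (i, c)) ` {i. i < length \<alpha> \<and> c < \<alpha> ! i}"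
    by (auto simp: cells_def)
  moreover have "inj_on T {x\<in>cells \<alpha>. snd x = c}"
    using column_injective_comp_tableau[OF tableau]
    by (auto simp: inj_on_def column_injective_def)
  ultimately show ?thesis
    unfolding column_values_def col_height_def by (simp add: card_image inj_on_def)
qed

lemma card_keys_lookup_greater: "card {v\<in>keys (content \<alpha> T). c < lookup (content \<alpha> T) v} = col_height \<alpha> c"
proof -
  have "card {v\<in>keys (content \<alpha> T). c < lookup (content \<alpha> T) v} =
      size (filter_mset ((<) c) (mset (flat (content \<alpha> T))))"
    by (simp add: length_filter_flat flip: mset_filter)
  also have "\<dots> = length (filter ((<) c) \<alpha>)"
    by (simp add: content_perm flip: mset_filter)
  also have "\<dots> = col_height \<alpha> c"
    by (simp add: col_height_def length_filter_conv_card)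
  finally show ?thesis .
qed

lemma card_columns_containing_le:
  "card {c\<in>{..<m}. v \<in> column_values c} \<le> min (lookup (content \<alpha> T) v) m"
proof -
  have "card {c\<in>{..<m}. v \<in> column_values c} \<le> card (snd ` {x\<in>cells \<alpha>. T x = v})"
    by (intro card_mono) (auto simp: column_values_def)
  also have "\<dots> \<le> card {x\<in>cells \<alpha>. T x = v}"
    by (rule card_image_le) simp
  finally have "card {c\<in>{..<m}. v \<in> column_values c} \<le> lookup (content \<alpha> T) v"
    by (simp add: lookup_content)
  moreover have "card {c\<in>{..<m}. v \<in> column_values c} \<le> m"
    using card_mono[of "{..<m}" "{c\<in>{..<m}. v \<in> column_values c}"] by auto
  ultimately show ?thesis by simp
qed

lemma card_columns_containing:
  assumes "v \<in> keys (content \<alpha> T)"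
  shows "card {c\<in>{..<m}. v \<in> column_values c} = min (lookup (content \<alpha> T) v) m"
proof -
  let ?V = "keys (content \<alpha> T)"
  have "(\<Sum>v\<in>?V. card {c\<in>{..<m}. v \<in> column_values c}) = (\<Sum>c<m. card {v\<in>?V. v \<in> column_values c})"
    by (rule sum_card_filter_swap) auto
  also have "\<dots> = (\<Sum>c<m. col_height \<alpha> c)"
    using column_values_subset_keys card_column_values by (simp add: Int_absorb1 Collect_conj_eq)
  also have "\<dots> = (\<Sum>c<m. card {v\<in>?V. c < lookup (content \<alpha> T) v})"
    by (simp add: card_keys_lookup_greater)
  also have "\<dots> = (\<Sum>v\<in>?V. card {c\<in>{..<m}. c < lookup (content \<alpha> T) v})"
    by (rule sum_card_filter_swap[symmetric]) auto
  finally have "(\<Sum>v\<in>?V. card {c\<in>{..<m}. v \<in> column_values c}) = (\<Sum>v\<in>?V. min (lookup (content \<alpha> T) v) m)"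
    by (simp add: card_less_less)
  then show ?thesis
    by (rule sum_mono_inv) (use card_columns_containing_le assms in auto)
qed

lemma mem_column_values_iff:
  assumes "v \<in> keys (content \<alpha> T)"
  shows "v \<in> column_values c \<longleftrightarrow> c < lookup (content \<alpha> T) v"
proof -
  have "{c'\<in>{..<Suc c}. v \<in> column_values c'} =
      (if v \<in> column_values c then insert c else id) {c'\<in>{..<c}. v \<in> column_values c'}"
    by (auto simp: less_Suc_eq)
  then have "card {c'\<in>{..<Suc c}. v \<in> column_values c'} =
      (if v \<in> column_values c then Suc else id) (card {c'\<in>{..<c}. v \<in> column_values c'})"
    by simp
  then show ?thesis
    using card_columns_containing[OF assms, of c] card_columns_containing[OF assms, of "Suc c"]
    by (auto simp: min_def split: if_splits)
qed

lemma first_column_strict: "i < j \<Longrightarrow> j < length \<alpha> \<Longrightarrow> T (i, 0) < T (j, 0)"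
  using tableau unfolding comp_tableau_def by blast

lemma first_column_inj: "i < length \<alpha> \<Longrightarrow> j < length \<alpha> \<Longrightarrow> T (i, 0) = T (j, 0) \<Longrightarrow> i = j"
  by (cases i j rule: linorder_cases) (auto dest: first_column_strict)

lemma column_values_Suc_subset:
  assumes IH: "\<And>i. (i, c) \<in> cells \<alpha> \<Longrightarrow> T (i, c) = T (i, 0)"
  defines "R \<equiv> {i. i < length \<alpha> \<and> Suc c < \<alpha> ! i}"
  shows "column_values (Suc c) \<subseteq> (\<lambda>i. T (i, 0)) ` R"
proof
  have R_cells: "(i, c) \<in> cells \<alpha>" "(i, Suc c) \<in> cells \<alpha>" if "i \<in> R" for i
    using that by (auto simp: R_def cells_def)
  fix v assume v: "v \<in> column_values (Suc c)"
  then obtain k where k: "k \<in> R" "v = T (k, Suc c)"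
    by (auto simp: column_values_def R_def cells_def)
  have "v \<in> keys (content \<alpha> T)" using v column_values_subset_keys by blast
  then have "v \<in> column_values c"
    using v mem_column_values_iff by auto
  then obtain j where j: "(j, c) \<in> cells \<alpha>" "v = T (j, c)"
    by (auto simp: column_values_def)
  then have v_j: "v = T (j, 0)" using IH by simp
  have "j \<in> R"
  proof (rule ccontr)
    assume "j \<notin> R"
    then have short: "j < length \<alpha>" "\<alpha> ! j < \<alpha> ! k"
      using j(1) k(1) by (auto simp: R_def cells_def)
    have "T (k, Suc c) \<le> T (k, c)"
      using tableau k(1) by (simp add: R_def comp_tableau_def)
    then have "\<not> k < j"
      using first_column_strict[of k j] IH[OF R_cells(1)[OF k(1)]] k(2) v_j short(1) by auto
    with \<open>j \<notin> R\<close> k(1) have "j < k" by (cases "j = k") auto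
    then have "T (k, c) < T (j, c) \<or> T (j, c) < T (k, Suc c)"
      using tableau j(1) R_cells[OF k(1)] short(2) unfolding comp_tableau_def by blast
    moreover have "T (j, 0) < T (k, 0)"
      using first_column_strict[OF \<open>j < k\<close>] k(1) by (simp add: R_def)
    ultimately show False
      using IH[OF R_cells(1)[OF k(1)]] j(2) k(2) v_j by auto
  qed
  then show "v \<in> (\<lambda>i. T (i, 0)) ` R" using v_j by blast
qed

lemma row_constant: "(i, c) \<in> cells \<alpha> \<Longrightarrow> T (i, c) = T (i, 0)"
proof (induction c arbitrary: i)
  case 0
  then show ?case by simp
next
  case (Suc c)
  define R where "R = {i. i < length \<alpha> \<and> Suc c < \<alpha> ! i}"
  have R_le: "T (i, Suc c) \<le> T (i, 0)" if "i \<in> R" for i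
  proof -
    have "T (i, Suc c) \<le> T (i, c)" "(i, c) \<in> cells \<alpha>"
      using tableau that by (simp_all add: R_def comp_tableau_def cells_def)
    then show ?thesis using Suc.IH by simp
  qed
  have col: "column_values (Suc c) = (\<lambda>i. T (i, Suc c)) ` R"
    by (auto simp: column_values_def R_def cells_def image_iff)
  have inj_col: "inj_on (\<lambda>i. T (i, Suc c)) R"
    using column_injective_comp_tableau[OF tableau]
    by (auto simp: inj_on_def column_injective_def R_def cells_def)
  have inj_first: "inj_on (\<lambda>i. T (i, 0)) R"
    using first_column_inj by (auto simp: inj_on_def R_def)
  have "card (column_values (Suc c)) = card ((\<lambda>i. T (i, 0)) ` R)"
    using col inj_col inj_first by (simp add: card_image)
  then have col_eq: "column_values (Suc c) = (\<lambda>i. T (i, 0)) ` R"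
    using column_values_Suc_subset[OF Suc.IH] by (simp add: card_subset_eq R_def)
  have "(\<Sum>i\<in>R. T (i, Suc c)) = (\<Sum>i\<in>R. T (i, 0))"
    using col col_eq sum.reindex[OF inj_col, of id] sum.reindex[OF inj_first, of id] by simp
  moreover have "i \<in> R"
    using Suc.prems by (auto simp: R_def cells_def)
  ultimately show ?case
    using sum_mono_inv[of "\<lambda>i. T (i, Suc c)" R "\<lambda>i. T (i, 0)" i] R_le by (simp add: R_def)
qed

lemma cells_with_first_column_value:
  assumes "i < length \<alpha>"
  shows "{y\<in>cells \<alpha>. T y = T (i, 0)} = {i} \<times> {..<\<alpha> ! i}"
proof -
  have "T y = T (i, 0) \<longleftrightarrow> fst y = i" if "y \<in> cells \<alpha>" for y
    using that row_constant[of "fst y" "snd y"] first_column_inj[of "fst y" i] assms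
    by (cases y) (auto simp: cells_def)
  then show ?thesis using assms by (auto simp: cells_def)
qed

lemma lookup_content_first_column: "i < length \<alpha> \<Longrightarrow> lookup (content \<alpha> T) (T (i, 0)) = \<alpha> ! i"
  by (simp add: lookup_content cells_with_first_column_value card_cartesian_product)

lemma keys_content_eq_first_column: "keys (content \<alpha> T) = (\<lambda>i. T (i, 0)) ` {..<length \<alpha>}"
  unfolding keys_content
proof (intro equalityI subsetI)
  fix v assume "v \<in> T ` cells \<alpha>"
  then obtain i c where "(i, c) \<in> cells \<alpha>" "v = T (i, c)" by auto
  then show "v \<in> (\<lambda>i. T (i, 0)) ` {..<length \<alpha>}"
    using row_constant[of i c] by (auto simp: cells_def)
next
  fix v assume "v \<in> (\<lambda>i. T (i, 0)) ` {..<length \<alpha>}"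
  then obtain i where "i < length \<alpha>" "v = T (i, 0)" by auto
  moreover have "(i, 0) \<in> cells \<alpha>"
    using comp \<open>i < length \<alpha>\<close> by (simp add: cells_def is_comp_def)
  ultimately show "v \<in> T ` cells \<alpha>" by blast
qed

lemma sorted_list_of_set_keys_content:
  "sorted_list_of_set (keys (content \<alpha> T)) = map (\<lambda>i. T (i, 0)) [0..<length \<alpha>]"
proof -
  let ?xs = "map (\<lambda>i. T (i, 0)) [0..<length \<alpha>]"
  have "sorted_wrt (<) ?xs"
    by (auto simp: sorted_wrt_iff_nth_less intro: first_column_strict)
  then have "sorted ?xs" "distinct ?xs"
    by (auto simp: strict_sorted_iff)
  moreover have "set ?xs = keys (content \<alpha> T)"
    by (simp add: keys_content_eq_first_column atLeast0LessThan)
  ultimately show ?thesis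
    using sorted_list_of_set.idem_if_sorted_distinct[of ?xs] by simp
qed

lemma flat_content_eq_shape: "flat (content \<alpha> T) = \<alpha>"
  unfolding flat_def sorted_list_of_set_keys_content
  by (rule nth_equalityI) (simp_all add: lookup_content_first_column)

lemma entry_eq_nth_keys_content:
  "y \<in> cells \<alpha> \<Longrightarrow> T y = sorted_list_of_set (keys (content \<alpha> T)) ! fst y"
  using row_constant[of "fst y" "snd y"] by (cases y) (auto simp: sorted_list_of_set_keys_content cells_def)

end

section \<open>Triangularity of the quasisymmetric Schur polynomials\<close>

lemma finite_filling: "finite {T. filling n \<alpha> T}"
proof (rule finite_subset)
  show "{T. filling n \<alpha> T} \<subseteq> {T. \<forall>c. (c \<in> cells \<alpha> \<longrightarrow> T c \<in> {0..n}) \<and> (c \<notin> cells \<alpha> \<longrightarrow> T c = 0)}"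
    by (auto simp: filling_def)
  show "finite {T. \<forall>c. (c \<in> cells \<alpha> \<longrightarrow> T c \<in> {0..n}) \<and> (c \<notin> cells \<alpha> \<longrightarrow> T c = 0)}"
    by (rule finite_set_of_finite_funs) simp_all
qed

lemma finite_comp_tableau: "finite {T. comp_tableau n \<alpha> T}"
  by (rule finite_subset[OF _ finite_filling[of n \<alpha>]]) (auto simp: comp_tableau_def)

lemma finite_ssyt: "finite {T. ssyt n \<alpha> T}"
  by (rule finite_subset[OF _ finite_filling[of n \<alpha>]]) (auto simp: ssyt_def)

lemma lookup_sum_single_one:
  assumes "finite A"
  shows "lookup (\<Sum>x\<in>A. Poly_Mapping.single (g x) (1::int)) e = int (card {x\<in>A. g x = e})"
proof -
  have "lookup (\<Sum>x\<in>A. Poly_Mapping.single (g x) (1::int)) e = (\<Sum>x\<in>A. if g x = e then 1 else 0)"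
    unfolding lookup_sum lookup_single when_def by (rule sum.cong) auto
  also have "\<dots> = int (card {x\<in>A. g x = e})"
    using assms by (simp add: sum.inter_filter[symmetric])
  finally show ?thesis .
qed

lemma lookup_qschur:
  "lookup (qschur n \<alpha>) e = int (card {T. comp_tableau n \<alpha> T \<and> content \<alpha> T = e})"
  unfolding qschur_def tab_monomial_content
  by (subst lookup_sum_single_one[OF finite_comp_tableau]) simp

lemma comp_tableau_if_lookup_qschur:
  assumes "lookup (qschur n \<alpha>) e \<noteq> 0"
  obtains T where "comp_tableau n \<alpha> T" "content \<alpha> T = e"
proof -
  have "card {T. comp_tableau n \<alpha> T \<and> content \<alpha> T = e} \<noteq> 0"
    using assms by (simp add: lookup_qschur)
  then have "{T. comp_tableau n \<alpha> T \<and> content \<alpha> T = e} \<noteq> {}"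
    by (metis card.empty)
  then show ?thesis using that by blast
qed

lemma dominates_flat_if_lookup_qschur:
  "lookup (qschur n \<alpha>) e \<noteq> 0 \<Longrightarrow> dominates (partition_of \<alpha>) (partition_of (flat e))"
  by (erule comp_tableau_if_lookup_qschur) (auto dest: column_injective_comp_tableau dominates_flat_content)

lemma flat_eq_if_lookup_qschur:
  assumes "lookup (qschur n \<alpha>) e \<noteq> 0" "is_comp \<alpha>" "partition_of (flat e) = partition_of \<alpha>"
  shows "flat e = \<alpha>"
proof -
  obtain T where T: "comp_tableau n \<alpha> T" "content \<alpha> T = e"
    using assms(1) by (rule comp_tableau_if_lookup_qschur)
  have "mset (flat (content \<alpha> T)) = mset \<alpha>"
    using assms(3) T(2) by (metis mset_partition_of)
  then show ?thesis
    using flat_content_eq_shape[OF T(1) assms(2)] T(2) by simp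
qed

text \<open>For \<open>flat e = \<alpha>\<close> this is the only composition tableau of shape \<open>\<alpha>\<close> and content \<open>e\<close>.\<close>

definition row_filling :: "nat list \<Rightarrow> nat list \<Rightarrow> nat \<times> nat \<Rightarrow> nat" where
  "row_filling \<alpha> s c = (if c \<in> cells \<alpha> then s ! fst c else 0)"

lemma comp_tableau_row_filling:
  assumes "is_comp \<alpha>" "length s = length \<alpha>" "sorted_wrt (<) s" "set s \<subseteq> {1..n}"
  shows "comp_tableau n \<alpha> (row_filling \<alpha> s)"
  unfolding comp_tableau_def
proof (intro conjI allI impI)
  have strict: "i < j \<Longrightarrow> j < length \<alpha> \<Longrightarrow> s ! i < s ! j" for i j
    using assms(2,3) by (simp add: sorted_wrt_iff_nth_less)
  have "s ! i \<in> {1..n}" if "i < length \<alpha>" for i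
  proof -
    have "s ! i \<in> set s" using that assms(2) by simp
    then show ?thesis using assms(4) by blast
  qed
  then show "filling n \<alpha> (row_filling \<alpha> s)"
    by (auto simp: filling_def row_filling_def cells_def)
  show "row_filling \<alpha> s (i, Suc j) \<le> row_filling \<alpha> s (i, j)" if "i < length \<alpha> \<and> Suc j < \<alpha> ! i" for i j
    using that by (simp add: row_filling_def cells_def)
  show "row_filling \<alpha> s (i, 0) < row_filling \<alpha> s (i', 0)" if "i < i' \<and> i' < length \<alpha>" for i i'
    using that assms(1) strict by (auto simp: row_filling_def cells_def is_comp_def)
  show "row_filling \<alpha> s (j, k) < row_filling \<alpha> s (i, k) \<or> row_filling \<alpha> s (i, k - 1) < row_filling \<alpha> s (j, k)"
    if "i < j \<and> (i, k) \<in> cells \<alpha> \<and> (j, k) \<in> cells \<alpha>" "\<alpha> ! j \<le> \<alpha> ! i \<and> 1 \<le> k" for i j k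
    using that strict by (auto simp: row_filling_def cells_def)
  show "row_filling \<alpha> s (j, k) < row_filling \<alpha> s (i, k) \<or> row_filling \<alpha> s (i, k) < row_filling \<alpha> s (j, Suc k)"
    if "i < j \<and> (i, k) \<in> cells \<alpha> \<and> (j, k) \<in> cells \<alpha>" "\<alpha> ! i < \<alpha> ! j" for i j k
    using that strict by (auto simp: row_filling_def cells_def)
qed

lemma content_row_filling:
  assumes "flat e = \<alpha>"
  shows "content \<alpha> (row_filling \<alpha> (sorted_list_of_set (keys e))) = e"
proof (rule poly_mapping_eqI)
  fix v
  define s where "s = sorted_list_of_set (keys e)"
  have len: "length s = length \<alpha>"
    using arg_cong[OF assms, of length] by (simp add: s_def flat_def)
  have lookup_s: "lookup e (s ! i) = \<alpha> ! i" if "i < length \<alpha>" for i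
  proof -
    have "flat e ! i = lookup e (s ! i)"
      using that len by (simp add: flat_def s_def)
    then show ?thesis using assms by simp
  qed
  have s_inj: "i < length \<alpha> \<Longrightarrow> j < length \<alpha> \<Longrightarrow> s ! i = s ! j \<longleftrightarrow> i = j" for i j
    using len by (simp add: s_def nth_eq_iff_index_eq)
  show "lookup (content \<alpha> (row_filling \<alpha> s)) v = lookup e v"
  proof (cases "\<exists>i<length \<alpha>. v = s ! i")
    case True
    then obtain i where i: "i < length \<alpha>" "v = s ! i" by blast
    have "{c\<in>cells \<alpha>. row_filling \<alpha> s c = v} = {i} \<times> {..<\<alpha> ! i}"
      using i s_inj by (auto simp: row_filling_def cells_def)
    then show ?thesis using i lookup_s by (simp add: lookup_content card_cartesian_product)
  next
    case False
    then have "{c\<in>cells \<alpha>. row_filling \<alpha> s c = v} = {}"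
      by (auto simp: row_filling_def cells_def)
    moreover have "v \<notin> keys e"
    proof
      assume "v \<in> keys e"
      then have "v \<in> set s" by (simp add: s_def)
      then show False using False len by (auto simp: in_set_conv_nth)
    qed
    ultimately show ?thesis by (simp add: lookup_content in_keys_iff)
  qed
qed

lemma lookup_qschur_flat_eq:
  assumes "keys e \<subseteq> {1..n}" "flat e = \<alpha>" "is_comp \<alpha>"
  shows "lookup (qschur n \<alpha>) e = 1"
proof -
  define s where "s = sorted_list_of_set (keys e)"
  have "length s = length \<alpha>"
    using arg_cong[OF assms(2), of length] by (simp add: s_def flat_def)
  moreover have "sorted_wrt (<) s" "set s \<subseteq> {1..n}"
    using assms(1) by (simp_all add: s_def)
  ultimately have tableau: "comp_tableau n \<alpha> (row_filling \<alpha> s)"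
    using assms(3) by (intro comp_tableau_row_filling)
  have unique: "T = row_filling \<alpha> s" if "comp_tableau n \<alpha> T" "content \<alpha> T = e" for T
  proof
    fix c
    have "mset (flat (content \<alpha> T)) = mset \<alpha>" using that(2) assms(2) by simp
    show "T c = row_filling \<alpha> s c"
    proof (cases "c \<in> cells \<alpha>")
      case True
      then show ?thesis
        using entry_eq_nth_keys_content[OF that(1) assms(3) \<open>mset _ = mset \<alpha>\<close>] that(2)
        by (simp add: row_filling_def s_def)
    next
      case False
      moreover have "T c = 0"
        using that(1) False unfolding comp_tableau_def filling_def by blast
      ultimately show ?thesis
        by (simp add: row_filling_def)
    qed
  qed
  have "{T. comp_tableau n \<alpha> T \<and> content \<alpha> T = e} = {row_filling \<alpha> s}"
  proof (intro equalityI subsetI)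
    fix T assume "T \<in> {T. comp_tableau n \<alpha> T \<and> content \<alpha> T = e}"
    then show "T \<in> {row_filling \<alpha> s}" using unique by blast
  next
    fix T assume "T \<in> {row_filling \<alpha> s}"
    then show "T \<in> {T. comp_tableau n \<alpha> T \<and> content \<alpha> T = e}"
      using tableau content_row_filling[OF assms(2)] by (simp add: s_def)
  qed
  then show ?thesis by (simp add: lookup_qschur)
qed

section \<open>Quasisymmetry of the product\<close>

definition quasisym :: "nat \<Rightarrow> ipoly \<Rightarrow> bool" where
  "quasisym n P \<longleftrightarrow> (\<forall>e. lookup P e \<noteq> 0 \<longrightarrow> keys e \<subseteq> {1..n}) \<and>
     (\<forall>e e'. keys e \<subseteq> {1..n} \<longrightarrow> keys e' \<subseteq> {1..n} \<longrightarrow> flat e = flat e' \<longrightarrow> lookup P e = lookup P e')"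

lemma quasisymD:
  assumes "quasisym n P"
  shows "lookup P e \<noteq> 0 \<Longrightarrow> keys e \<subseteq> {1..n}"
    and "keys e \<subseteq> {1..n} \<Longrightarrow> keys e' \<subseteq> {1..n} \<Longrightarrow> flat e = flat e' \<Longrightarrow> lookup P e = lookup P e'"
  using assms unfolding quasisym_def by blast+

lemma keys_add_nat: "keys ((a::nat \<Rightarrow>\<^sub>0 nat) + b) = keys a \<union> keys b"
  by (auto simp: in_keys_iff lookup_add)

lemma filling_values:
  assumes "filling n \<alpha> T" "keys (content \<alpha> T) \<subseteq> K"
  shows "T c \<in> insert 0 K"
proof (cases "c \<in> cells \<alpha>")
  case True
  then show ?thesis using assms(2) by (auto simp: keys_content)
next
  case False
  then show ?thesis using assms(1) unfolding filling_def by blast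
qed

lemma comp_tableau_relabel:
  assumes "comp_tableau n \<alpha> T" "strict_mono_on W \<sigma>" "\<forall>c. T c \<in> W" "\<sigma> 0 = 0"
    "\<forall>c\<in>cells \<alpha>. \<sigma> (T c) \<in> {1..n}"
  shows "comp_tableau n \<alpha> (\<sigma> \<circ> T)"
proof -
  have "\<sigma> (T a) < \<sigma> (T b) \<longleftrightarrow> T a < T b" "\<sigma> (T a) \<le> \<sigma> (T b) \<longleftrightarrow> T a \<le> T b" for a b
    using strict_mono_on_less[OF assms(2)] strict_mono_on_less_eq[OF assms(2)] assms(3) by blast+
  moreover have "filling n \<alpha> (\<sigma> \<circ> T)"
    using assms(1,4,5) unfolding comp_tableau_def filling_def by auto
  ultimately show ?thesis
    using assms(1) unfolding comp_tableau_def by simp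
qed

lemma ssyt_relabel:
  assumes "ssyt n \<alpha> T" "strict_mono_on W \<sigma>" "\<forall>c. T c \<in> W" "\<sigma> 0 = 0"
    "\<forall>c\<in>cells \<alpha>. \<sigma> (T c) \<in> {1..n}"
  shows "ssyt n \<alpha> (\<sigma> \<circ> T)"
proof -
  have "\<sigma> (T a) < \<sigma> (T b) \<longleftrightarrow> T a < T b" "\<sigma> (T a) \<le> \<sigma> (T b) \<longleftrightarrow> T a \<le> T b" for a b
    using strict_mono_on_less[OF assms(2)] strict_mono_on_less_eq[OF assms(2)] assms(3) by blast+
  moreover have "filling n \<alpha> (\<sigma> \<circ> T)"
    using assms(1,4,5) unfolding ssyt_def filling_def by auto
  ultimately show ?thesis
    using assms(1) unfolding ssyt_def by simp
qed

lemma lookup_content_comp: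
  assumes "\<forall>c\<in>cells \<alpha>. T c \<in> A" "inj_on \<sigma> A"
  shows "lookup (content \<alpha> (\<sigma> \<circ> T)) w =
    (if w \<in> \<sigma> ` A then lookup (content \<alpha> T) (the_inv_into A \<sigma> w) else 0)"
proof (cases "w \<in> \<sigma> ` A")
  case True
  then obtain v where v: "v \<in> A" "w = \<sigma> v" by blast
  have "{c\<in>cells \<alpha>. \<sigma> (T c) = \<sigma> v} = {c\<in>cells \<alpha>. T c = v}"
    using assms v(1) by (auto simp: inj_on_def)
  then show ?thesis
    using v by (simp add: lookup_content the_inv_into_f_f[OF assms(2)])
next
  case False
  then have "{c\<in>cells \<alpha>. \<sigma> (T c) = w} = {}" using assms(1) by auto
  then show ?thesis using False by (simp add: lookup_content)
qed

lemma strict_mono_on_insert_zero: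
  fixes s s' :: "nat list"
  assumes "sorted_wrt (<) s" "sorted_wrt (<) s'" "length s' = length s" "0 \<notin> set s'"
    and "\<sigma> 0 = 0" "\<And>i. i < length s \<Longrightarrow> \<sigma> (s ! i) = s' ! i"
  shows "strict_mono_on (insert 0 (set s)) \<sigma>"
proof (rule monotone_onI)
  fix a b assume ab: "a \<in> insert 0 (set s)" "b \<in> insert 0 (set s)" "a < b"
  then obtain j where j: "j < length s" "b = s ! j" by (auto simp: in_set_conv_nth)
  show "\<sigma> a < \<sigma> b"
  proof (cases "a = 0")
    case True
    have "s' ! j \<in> set s'" using j assms(3) by simp
    then have "s' ! j \<noteq> 0" using assms(4) by metis
    then show ?thesis using True assms(5,6) j by simp
  next
    case False
    then obtain i where i: "i < length s" "a = s ! i" using ab by (auto simp: in_set_conv_nth)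
    have "i < j"
    proof (rule ccontr)
      assume "\<not> i < j"
      then have "s ! j \<le> s ! i"
        using assms(1) i(1) by (cases "i = j") (auto simp: sorted_wrt_iff_nth_less less_imp_le)
      then show False using ab(3) i j by simp
    qed
    then show ?thesis
      using assms(2,3,6) i j by (simp add: sorted_wrt_iff_nth_less)
  qed
qed

lemma flat_eq_order_iso:
  assumes "keys e \<subseteq> {1..n}" "keys e' \<subseteq> {1..n}" "flat e = flat e'"
  obtains \<sigma> where "\<sigma> 0 = 0" "strict_mono_on (insert 0 (keys e)) \<sigma>" "\<sigma> ` keys e = keys e'"
    "\<And>v. v \<in> keys e \<Longrightarrow> lookup e' (\<sigma> v) = lookup e v"
proof -
  define s where "s = sorted_list_of_set (keys e)"
  define s' where "s' = sorted_list_of_set (keys e')"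
  have len: "length s' = length s"
    using arg_cong[OF assms(3), of length] by (simp add: flat_def s_def s'_def)
  have set_s: "set s = keys e" "set s' = keys e'"
    by (simp_all add: s_def s'_def)
  have strict: "sorted_wrt (<) s" "sorted_wrt (<) s'"
    by (simp_all add: s_def s'_def)
  have inj: "inj_on (nth s) {..<length s}"
    by (simp add: inj_on_nth s_def)
  have "nth s ` {..<length s} = set s"
    by (auto simp: in_set_conv_nth)
  then have image_s: "nth s ` {..<length s} = keys e"
    using set_s(1) by simp
  define \<sigma> where "\<sigma> v = (if v \<in> keys e then s' ! the_inv_into {..<length s} (nth s) v else 0)" for v
  have \<sigma>_nth: "\<sigma> (s ! i) = s' ! i" if "i < length s" for i
    using that image_s the_inv_into_f_f[OF inj] by (auto simp: \<sigma>_def)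
  have "0 \<notin> keys e" using assms(1) by auto
  show ?thesis
  proof
    show "\<sigma> 0 = 0" using \<open>0 \<notin> keys e\<close> by (simp add: \<sigma>_def)
    have "\<sigma> ` keys e = \<sigma> ` nth s ` {..<length s}"
      using image_s by simp
    also have "\<dots> = nth s' ` {..<length s}"
      using \<sigma>_nth by (force simp: image_iff)
    also have "\<dots> = set s'"
      using len by (auto simp: in_set_conv_nth)
    finally show "\<sigma> ` keys e = keys e'"
      using set_s(2) by simp
    show "lookup e' (\<sigma> v) = lookup e v" if v: "v \<in> keys e" for v
    proof -
      obtain i where i: "i < length s" "v = s ! i" using v image_s by auto
      have "lookup e (s ! i) = flat e ! i" using i by (simp add: flat_def s_def)
      also have "\<dots> = lookup e' (s' ! i)" using i len assms(3) by (simp add: flat_def s'_def)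
      finally show ?thesis using i \<sigma>_nth by simp
    qed
    have "0 \<notin> set s'" using assms(2) set_s(2) by auto
    then show "strict_mono_on (insert 0 (keys e)) \<sigma>"
      using strict_mono_on_insert_zero[OF strict len _ \<open>\<sigma> 0 = 0\<close> \<sigma>_nth] set_s(1) by simp
  qed
qed

definition tableau_pairs ::
    "nat \<Rightarrow> nat list \<Rightarrow> nat list \<Rightarrow> (nat \<Rightarrow>\<^sub>0 nat) \<Rightarrow> ((nat \<times> nat \<Rightarrow> nat) \<times> (nat \<times> nat \<Rightarrow> nat)) set" where
  "tableau_pairs n lam \<beta> e =
     {(T1, T2). ssyt n lam T1 \<and> comp_tableau n \<beta> T2 \<and> content lam T1 + content \<beta> T2 = e}"

lemma finite_tableau_pairs: "finite (tableau_pairs n lam \<beta> e)"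
  by (rule finite_subset[OF _ finite_cartesian_product[OF finite_ssyt finite_comp_tableau]])
    (auto simp: tableau_pairs_def)

lemma lookup_schur_mult_qschur:
  "lookup (schur n lam * qschur n \<beta>) e = int (card (tableau_pairs n lam \<beta> e))"
proof -
  let ?A = "{T. ssyt n lam T} \<times> {T. comp_tableau n \<beta> T}"
  have "schur n lam * qschur n \<beta> =
      (\<Sum>p\<in>?A. Poly_Mapping.single (content lam (fst p) + content \<beta> (snd p)) (1::int))"
    unfolding schur_def qschur_def tab_monomial_content sum_product mult_single
    by (simp add: sum.cartesian_product case_prod_beta)
  moreover have "{p\<in>?A. content lam (fst p) + content \<beta> (snd p) = e} = tableau_pairs n lam \<beta> e"
    by (auto simp: tableau_pairs_def)
  ultimately show ?thesis
    by (simp add: lookup_sum_single_one finite_ssyt finite_comp_tableau)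
qed

lemma tableau_pair_relabel:
  assumes pair: "(T1, T2) \<in> tableau_pairs n lam \<beta> e" and "keys e' \<subseteq> {1..n}"
    and \<sigma>: "\<sigma> 0 = 0" "strict_mono_on (insert 0 (keys e)) \<sigma>" "\<sigma> ` keys e = keys e'"
      "\<And>v. v \<in> keys e \<Longrightarrow> lookup e' (\<sigma> v) = lookup e v"
  shows "(\<sigma> \<circ> T1, \<sigma> \<circ> T2) \<in> tableau_pairs n lam \<beta> e'"
proof -
  have T1: "ssyt n lam T1" and T2: "comp_tableau n \<beta> T2"
    and sum: "content lam T1 + content \<beta> T2 = e"
    using pair by (auto simp: tableau_pairs_def)
  have keys1: "keys (content lam T1) \<subseteq> keys e" and keys2: "keys (content \<beta> T2) \<subseteq> keys e"
    using sum keys_add_nat by auto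
  have fill1: "filling n lam T1" and fill2: "filling n \<beta> T2"
    using T1 T2 by (simp_all add: ssyt_def comp_tableau_def)
  have cells1: "\<forall>c\<in>cells lam. T1 c \<in> keys e" and cells2: "\<forall>c\<in>cells \<beta>. T2 c \<in> keys e"
    using keys1 keys2 by (auto simp: keys_content)
  have range: "v \<in> keys e \<Longrightarrow> \<sigma> v \<in> {1..n}" for v
    using \<sigma>(3) assms(2) by blast
  have S1: "ssyt n lam (\<sigma> \<circ> T1)"
    using ssyt_relabel[OF T1 \<sigma>(2) _ \<sigma>(1)] filling_values[OF fill1 keys1] cells1 range by blast
  have S2: "comp_tableau n \<beta> (\<sigma> \<circ> T2)"
    using comp_tableau_relabel[OF T2 \<sigma>(2) _ \<sigma>(1)] filling_values[OF fill2 keys2] cells2 range by blast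
  have inj: "inj_on \<sigma> (keys e)"
    using strict_mono_on_imp_inj_on[OF \<sigma>(2)] by (rule inj_on_subset) auto
  have "content lam (\<sigma> \<circ> T1) + content \<beta> (\<sigma> \<circ> T2) = e'"
  proof (rule poly_mapping_eqI)
    fix w
    show "lookup (content lam (\<sigma> \<circ> T1) + content \<beta> (\<sigma> \<circ> T2)) w = lookup e' w"
    proof (cases "w \<in> keys e'")
      case True
      then obtain v where v: "v \<in> keys e" "w = \<sigma> v" using \<sigma>(3) by auto
      have "lookup (content lam (\<sigma> \<circ> T1) + content \<beta> (\<sigma> \<circ> T2)) w =
          lookup (content lam T1 + content \<beta> T2) v"
        using v lookup_content_comp[OF cells1 inj] lookup_content_comp[OF cells2 inj]
        by (simp add: lookup_add the_inv_into_f_f[OF inj])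
      then show ?thesis using sum \<sigma>(4) v by simp
    next
      case False
      then show ?thesis
        using \<sigma>(3) lookup_content_comp[OF cells1 inj] lookup_content_comp[OF cells2 inj]
        by (simp add: lookup_add in_keys_iff)
    qed
  qed
  then show ?thesis using S1 S2 by (simp add: tableau_pairs_def)
qed

lemma card_tableau_pairs_le:
  assumes "keys e \<subseteq> {1..n}" "keys e' \<subseteq> {1..n}" "flat e = flat e'"
  shows "card (tableau_pairs n lam \<beta> e) \<le> card (tableau_pairs n lam \<beta> e')"
proof -
  obtain \<sigma> where \<sigma>: "\<sigma> 0 = 0" "strict_mono_on (insert 0 (keys e)) \<sigma>" "\<sigma> ` keys e = keys e'"
      "\<And>v. v \<in> keys e \<Longrightarrow> lookup e' (\<sigma> v) = lookup e v"
    using flat_eq_order_iso[OF assms] by blast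
  define F where "F p = (\<sigma> \<circ> fst p, \<sigma> \<circ> snd p)" for p :: "(nat \<times> nat \<Rightarrow> nat) \<times> (nat \<times> nat \<Rightarrow> nat)"
  have entries: "fst p c \<in> insert 0 (keys e) \<and> snd p c \<in> insert 0 (keys e)"
    if p: "p \<in> tableau_pairs n lam \<beta> e" for p c
  proof -
    obtain T1 T2 where "p = (T1, T2)" "ssyt n lam T1" "comp_tableau n \<beta> T2"
      "content lam T1 + content \<beta> T2 = e"
      using p by (auto simp: tableau_pairs_def)
    then show ?thesis
      using filling_values[of n lam T1 "keys e" c] filling_values[of n \<beta> T2 "keys e" c] keys_add_nat
      by (auto simp: ssyt_def comp_tableau_def)
  qed
  have "inj_on F (tableau_pairs n lam \<beta> e)"
  proof (rule inj_onI)
    fix p q assume p: "p \<in> tableau_pairs n lam \<beta> e" and q: "q \<in> tableau_pairs n lam \<beta> e"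
      and eq: "F p = F q"
    have eq_\<sigma>: "\<sigma> (fst p c) = \<sigma> (fst q c)" "\<sigma> (snd p c) = \<sigma> (snd q c)" for c
      using fun_cong[OF arg_cong[OF eq, of fst], of c] fun_cong[OF arg_cong[OF eq, of snd], of c]
      by (simp_all add: F_def)
    have "fst p c = fst q c" "snd p c = snd q c" for c
      using strict_mono_on_eq[OF \<sigma>(2), of "fst p c" "fst q c"] strict_mono_on_eq[OF \<sigma>(2), of "snd p c" "snd q c"]
        entries[OF p, of c] entries[OF q, of c] eq_\<sigma>[of c] by simp_all
    then show "p = q" by (simp add: prod_eq_iff fun_eq_iff)
  qed
  moreover have "F ` tableau_pairs n lam \<beta> e \<subseteq> tableau_pairs n lam \<beta> e'"
    using tableau_pair_relabel[OF _ assms(2) \<sigma>] by (auto simp: F_def)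
  ultimately show ?thesis
    using card_inj_on_le[OF _ _ finite_tableau_pairs] by blast
qed

lemma quasisym_schur_mult_qschur: "quasisym n (schur n lam * qschur n \<beta>)"
  unfolding quasisym_def
proof (intro conjI allI impI)
  fix e assume "lookup (schur n lam * qschur n \<beta>) e \<noteq> 0"
  then obtain T1 T2 where "(T1, T2) \<in> tableau_pairs n lam \<beta> e"
    by (auto simp: lookup_schur_mult_qschur card_gt_0_iff)
  then have "filling n lam T1" "filling n \<beta> T2" "e = content lam T1 + content \<beta> T2"
    by (auto simp: tableau_pairs_def ssyt_def comp_tableau_def)
  then show "keys e \<subseteq> {1..n}"
    using keys_content_subset by (simp add: keys_add_nat)
next
  fix e e' assume "keys e \<subseteq> {1..n}" "keys e' \<subseteq> {1..n}" "flat e = flat e'"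
  then show "lookup (schur n lam * qschur n \<beta>) e = lookup (schur n lam * qschur n \<beta>) e'"
    using card_tableau_pairs_le[of e n e' lam \<beta>] card_tableau_pairs_le[of e' n e lam \<beta>]
    by (simp add: lookup_schur_mult_qschur)
qed

lemma schur_Nil: "schur n [] = 1"
proof -
  have "{T. ssyt n [] T} = {\<lambda>_. 0}"
    by (auto simp: ssyt_def filling_def cells_def fun_eq_iff)
  then show ?thesis by (simp add: schur_def tab_monomial_def cells_def)
qed

lemma quasisym_qschur: "quasisym n (qschur n \<beta>)"
  using quasisym_schur_mult_qschur[of n "[]" \<beta>] by (simp add: schur_Nil)

section \<open>Expansion in the quasisymmetric Schur basis\<close>

lemma lookup_of_int_mult: "lookup (of_int k * p) e = k * lookup (p::ipoly) e"
proof -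
  have "of_int k * p = Poly_Mapping.single 0 k * p"
    by (metis single_of_int of_int_eq_id id_apply)
  also have "\<dots> = Poly_Mapping.map ((*) k) p"
    by (simp add: mult_map_scale_conv_mult)
  finally show ?thesis
    by (auto simp: map.rep_eq when_def)
qed

lemma lookup_lincomb:
  "lookup (\<Sum>\<gamma>\<in>A. of_int (c \<gamma>) * Q \<gamma>) e = (\<Sum>\<gamma>\<in>A. c \<gamma> * lookup (Q \<gamma> :: ipoly) e)"
  by (simp add: lookup_sum lookup_of_int_mult)

lemma lookup_lincomb_nonzeroD:
  "lookup (\<Sum>\<gamma>\<in>A. of_int (c \<gamma>) * Q \<gamma>) e \<noteq> 0 \<Longrightarrow> \<exists>\<gamma>\<in>A. lookup (Q \<gamma> :: ipoly) e \<noteq> 0"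
proof (rule ccontr)
  assume "lookup (\<Sum>\<gamma>\<in>A. of_int (c \<gamma>) * Q \<gamma>) e \<noteq> 0" "\<not> (\<exists>\<gamma>\<in>A. lookup (Q \<gamma>) e \<noteq> 0)"
  then show False by (simp add: lookup_lincomb)
qed

lemma quasisym_diff:
  assumes "quasisym n P" "quasisym n Q"
  shows "quasisym n (P - Q)"
  unfolding quasisym_def
proof (intro conjI allI impI)
  fix e assume "lookup (P - Q) e \<noteq> 0"
  then have "lookup P e \<noteq> 0 \<or> lookup Q e \<noteq> 0"
    by (auto simp: lookup_minus)
  then show "keys e \<subseteq> {1..n}"
    using quasisymD(1)[OF assms(1)] quasisymD(1)[OF assms(2)] by blast
next
  fix e e' assume e: "keys e \<subseteq> {1..n}" "keys e' \<subseteq> {1..n}" "flat e = flat e'"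
  show "lookup (P - Q) e = lookup (P - Q) e'"
    using quasisymD(2)[OF assms(1) e] quasisymD(2)[OF assms(2) e] by (simp add: lookup_minus)
qed

lemma quasisym_lincomb:
  assumes "\<And>\<gamma>. \<gamma> \<in> A \<Longrightarrow> quasisym n (Q \<gamma>)"
  shows "quasisym n (\<Sum>\<gamma>\<in>A. of_int (c \<gamma>) * Q \<gamma>)"
  unfolding quasisym_def
proof (intro conjI allI impI)
  fix e assume "lookup (\<Sum>\<gamma>\<in>A. of_int (c \<gamma>) * Q \<gamma>) e \<noteq> 0"
  then obtain \<gamma> where "\<gamma> \<in> A" "lookup (Q \<gamma>) e \<noteq> 0"
    using lookup_lincomb_nonzeroD by blast
  then show "keys e \<subseteq> {1..n}" using quasisymD(1)[OF assms] by blast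
next
  fix e e' assume e: "keys e \<subseteq> {1..n}" "keys e' \<subseteq> {1..n}" "flat e = flat e'"
  have "lookup (Q \<gamma>) e = lookup (Q \<gamma>) e'" if "\<gamma> \<in> A" for \<gamma>
    using quasisymD(2)[OF assms[OF that] e] .
  then show "lookup (\<Sum>\<gamma>\<in>A. of_int (c \<gamma>) * Q \<gamma>) e = lookup (\<Sum>\<gamma>\<in>A. of_int (c \<gamma>) * Q \<gamma>) e'"
    by (simp add: lookup_lincomb)
qed

definition exp_of_comp :: "nat list \<Rightarrow> (nat \<Rightarrow>\<^sub>0 nat)" where
  "exp_of_comp \<gamma> = Abs_poly_mapping (\<lambda>v. if 1 \<le> v \<and> v \<le> length \<gamma> then \<gamma> ! (v - 1) else 0)"

lemma lookup_exp_of_comp: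
  "lookup (exp_of_comp \<gamma>) v = (if 1 \<le> v \<and> v \<le> length \<gamma> then \<gamma> ! (v - 1) else 0)"
proof -
  have "finite {v. (if 1 \<le> v \<and> v \<le> length \<gamma> then \<gamma> ! (v - 1) else 0) \<noteq> 0}"
    by (rule finite_subset[of _ "{1..length \<gamma>}"]) (auto split: if_splits)
  then show ?thesis by (simp add: exp_of_comp_def)
qed

lemma keys_exp_of_comp: "is_comp \<gamma> \<Longrightarrow> keys (exp_of_comp \<gamma>) = {1..length \<gamma>}"
  by (auto simp: in_keys_iff lookup_exp_of_comp is_comp_def split: if_splits)

lemma flat_exp_of_comp:
  assumes "is_comp \<gamma>"
  shows "flat (exp_of_comp \<gamma>) = \<gamma>"
proof -
  have "sorted_list_of_set {1..length \<gamma>} = map Suc [0..<length \<gamma>]"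
    by (simp add: map_Suc_upt atLeastLessThanSuc_atLeastAtMost[symmetric] del: upt_Suc)
  then show ?thesis
    by (intro nth_equalityI) (simp_all add: flat_def keys_exp_of_comp[OF assms] lookup_exp_of_comp del: upt_Suc)
qed

definition qschur_expansion :: "nat \<Rightarrow> ipoly \<Rightarrow> (nat list \<Rightarrow> int) \<Rightarrow> bool" where
  "qschur_expansion n P c \<longleftrightarrow> finite {\<gamma>. c \<gamma> \<noteq> 0} \<and> (\<forall>\<gamma>. c \<gamma> \<noteq> 0 \<longrightarrow> is_comp \<gamma> \<and> length \<gamma> \<le> n) \<and>
      P = (\<Sum>\<gamma>\<in>{\<gamma>. c \<gamma> \<noteq> 0}. of_int (c \<gamma>) * qschur n \<gamma>)"

lemma qschur_expansion_sum_superset: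
  assumes "qschur_expansion n P c" "finite B" "{\<gamma>. c \<gamma> \<noteq> 0} \<subseteq> B"
  shows "P = (\<Sum>\<gamma>\<in>B. of_int (c \<gamma>) * qschur n \<gamma>)"
  using assms sum.mono_neutral_left[OF assms(2,3), of "\<lambda>\<gamma>. of_int (c \<gamma>) * qschur n \<gamma>"]
  by (simp add: qschur_expansion_def)

definition strictly_below :: "nat list \<Rightarrow> nat list \<Rightarrow> bool" where
  "strictly_below a b \<longleftrightarrow> is_comp a \<and> is_comp b \<and>
     dominates (partition_of b) (partition_of a) \<and> partition_of a \<noteq> partition_of b"

lemma transp_strictly_below: "transp strictly_below"
proof (rule transpI)
  fix a b c assume ab: "strictly_below a b" and bc: "strictly_below b c"
  then have "dominates (partition_of c) (partition_of a)"
    using dominates_trans by (auto simp: strictly_below_def)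
  moreover have "partition_of a \<noteq> partition_of c"
  proof
    assume eq: "partition_of a = partition_of c"
    have "is_comp (partition_of a)" "is_comp (partition_of b)"
      using ab by (simp_all add: strictly_below_def is_comp_partition_of)
    moreover have "dominates (partition_of a) (partition_of b)"
      using bc eq by (simp add: strictly_below_def)
    moreover have "dominates (partition_of b) (partition_of a)"
      using ab by (simp add: strictly_below_def)
    ultimately have "partition_of a = partition_of b"
      by (rule dominates_antisym)
    then show False using ab by (simp add: strictly_below_def)
  qed
  ultimately show "strictly_below a c"
    using ab bc by (simp add: strictly_below_def)
qed

lemma asymp_strictly_below: "asymp strictly_below"
proof (rule asympI)
  fix a b assume "strictly_below a b"
  moreover have "\<not> strictly_below a a"
    by (simp add: strictly_below_def)
  ultimately show "\<not> strictly_below b a"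
    using transpD[OF transp_strictly_below, of a b a] by blast
qed

lemma ex_maximal_strictly_below:
  assumes "finite D" "D \<noteq> {}"
  obtains m where "m \<in> D" "\<forall>b\<in>D. \<not> strictly_below m b"
proof -
  obtain m where "m \<in> D" "\<forall>b\<in>D. b \<noteq> m \<longrightarrow> \<not> strictly_below m b"
    using Finite_Set.bex_max_element[OF assms(1)
        asymp_on_subset[OF asymp_strictly_below subset_UNIV]
        transp_on_subset[OF transp_strictly_below subset_UNIV] assms(2)]
    by blast
  moreover have "\<not> strictly_below m m"
    by (simp add: strictly_below_def)
  ultimately have "\<forall>b\<in>D. \<not> strictly_below m b"
    by auto
  then show thesis
    using that \<open>m \<in> D\<close> by blast
qed

lemma strictly_below_if_lookup_qschur_exp_of_comp:
  assumes "lookup (qschur n \<gamma>) (exp_of_comp g) \<noteq> 0" "is_comp \<gamma>" "is_comp g" "\<gamma> \<noteq> g"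
  shows "strictly_below g \<gamma>"
proof -
  have "dominates (partition_of \<gamma>) (partition_of g)"
    using dominates_flat_if_lookup_qschur[OF assms(1)] flat_exp_of_comp[OF assms(3)] by simp
  moreover have "partition_of g \<noteq> partition_of \<gamma>"
    using flat_eq_if_lookup_qschur[OF assms(1,2)] flat_exp_of_comp[OF assms(3)] assms(4) by auto
  ultimately show ?thesis
    using assms(2,3) by (simp add: strictly_below_def)
qed

lemma qschur_expansion_unique:
  assumes c: "qschur_expansion n P c" and c': "qschur_expansion n P c'"
  shows "c = c'"
proof (rule ccontr)
  assume "c \<noteq> c'"
  define A where "A = {\<gamma>. c \<gamma> \<noteq> 0} \<union> {\<gamma>. c' \<gamma> \<noteq> 0}"
  have "finite A" using c c' by (simp add: A_def qschur_expansion_def)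
  have A_comp: "is_comp \<gamma> \<and> length \<gamma> \<le> n" if "\<gamma> \<in> A" for \<gamma>
    using that c c' by (auto simp: A_def qschur_expansion_def)
  have zero: "(\<Sum>\<gamma>\<in>A. (c \<gamma> - c' \<gamma>) * lookup (qschur n \<gamma>) e) = 0" for e
  proof -
    have "lookup P e = (\<Sum>\<gamma>\<in>A. c \<gamma> * lookup (qschur n \<gamma>) e)"
      by (subst qschur_expansion_sum_superset[OF c \<open>finite A\<close>]) (auto simp: A_def lookup_lincomb)
    moreover have "lookup P e = (\<Sum>\<gamma>\<in>A. c' \<gamma> * lookup (qschur n \<gamma>) e)"
      by (subst qschur_expansion_sum_superset[OF c' \<open>finite A\<close>]) (auto simp: A_def lookup_lincomb)
    ultimately show ?thesis
      by (simp add: left_diff_distrib sum_subtractf)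
  qed
  define D where "D = {\<gamma>\<in>A. c \<gamma> \<noteq> c' \<gamma>}"
  obtain \<gamma> where "c \<gamma> \<noteq> c' \<gamma>" using \<open>c \<noteq> c'\<close> by auto
  then have "\<gamma> \<in> D" by (auto simp: D_def A_def)
  then have "D \<noteq> {}" by blast
  moreover have "finite D" using \<open>finite A\<close> by (simp add: D_def)
  ultimately obtain g where g: "g \<in> D" "\<forall>\<gamma>\<in>D. \<not> strictly_below g \<gamma>"
    using ex_maximal_strictly_below by blast
  have "g \<in> A" "is_comp g" "length g \<le> n"
    using g(1) A_comp by (auto simp: D_def)
  have "(c \<gamma> - c' \<gamma>) * lookup (qschur n \<gamma>) (exp_of_comp g) = 0" if "\<gamma> \<in> A - {g}" for \<gamma>
    using strictly_below_if_lookup_qschur_exp_of_comp[of n \<gamma> g] that A_comp[of \<gamma>] g(2) \<open>is_comp g\<close>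
    by (auto simp: D_def)
  then have "(\<Sum>\<gamma>\<in>A - {g}. (c \<gamma> - c' \<gamma>) * lookup (qschur n \<gamma>) (exp_of_comp g)) = 0"
    by (rule sum.neutral[OF ballI])
  then have "(\<Sum>\<gamma>\<in>A. (c \<gamma> - c' \<gamma>) * lookup (qschur n \<gamma>) (exp_of_comp g)) =
      (c g - c' g) * lookup (qschur n g) (exp_of_comp g)"
    unfolding sum.remove[OF \<open>finite A\<close> \<open>g \<in> A\<close>] by simp
  moreover have "lookup (qschur n g) (exp_of_comp g) = 1"
    using \<open>is_comp g\<close> \<open>length g \<le> n\<close>
    by (intro lookup_qschur_flat_eq) (simp_all add: keys_exp_of_comp flat_exp_of_comp)
  ultimately show False
    using zero[of "exp_of_comp g"] g(1) by (simp add: D_def)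
qed

lemma lr_coeff_eq:
  assumes "qschur_expansion n (schur n lam * qschur n \<beta>) c"
  shows "lr_coeff n lam \<beta> \<alpha> = c \<alpha>"
proof -
  have "(THE c. qschur_expansion n (schur n lam * qschur n \<beta>) c) = c"
    using assms qschur_expansion_unique by blast
  then show ?thesis
    by (simp add: lr_coeff_def qschur_expansion_def)
qed

lemma lookup_lincomb_qschur_same_shape:
  assumes "finite G" "keys e \<subseteq> {1..n}"
    "\<And>\<gamma>. \<gamma> \<in> G \<Longrightarrow> is_comp \<gamma> \<and> partition_of \<gamma> = partition_of (flat e)"
  shows "lookup (\<Sum>\<gamma>\<in>G. of_int (a \<gamma>) * qschur n \<gamma>) e = (if flat e \<in> G then a (flat e) else 0)"
proof -
  have "a \<gamma> * lookup (qschur n \<gamma>) e = (if \<gamma> = flat e then a \<gamma> else 0)" if "\<gamma> \<in> G" for \<gamma>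
  proof (cases "\<gamma> = flat e")
    case True
    then show ?thesis using lookup_qschur_flat_eq[OF assms(2) _ is_comp_flat] by simp
  next
    case False
    then show ?thesis using flat_eq_if_lookup_qschur[of n \<gamma> e] assms(3)[OF that] by auto
  qed
  then show ?thesis
    by (simp add: lookup_lincomb assms(1) cong: sum.cong)
qed

text \<open>Subtracting from \<open>P\<close> the terms \<open>S\<^sub>\<gamma>\<close>, \<open>\<gamma>\<close> of shape \<open>m\<close>, with the coefficients of \<open>P\<close> removes
  all monomials whose flattening has shape \<open>m\<close>: by triangularity each such \<open>S\<^sub>\<gamma>\<close> contributes
  only to \<open>x\<^sup>e\<close> with \<open>flat e = \<gamma>\<close>, and there with coefficient \<open>1\<close>.\<close>

lemma lookup_diff_leading_terms:
  assumes "quasisym n P" "keys e \<subseteq> {1..n}" "partition_of (flat e) = m"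
  defines "G \<equiv> {\<gamma> \<in> flat ` keys P. partition_of \<gamma> = m}"
  shows "lookup (P - (\<Sum>\<gamma>\<in>G. of_int (lookup P (exp_of_comp \<gamma>)) * qschur n \<gamma>)) e = 0"
proof -
  have "lookup (\<Sum>\<gamma>\<in>G. of_int (lookup P (exp_of_comp \<gamma>)) * qschur n \<gamma>) e =
      (if flat e \<in> G then lookup P (exp_of_comp (flat e)) else 0)"
    using assms(2,3) is_comp_flat
    by (intro lookup_lincomb_qschur_same_shape) (auto simp: G_def)
  moreover have "lookup P (exp_of_comp (flat e)) = lookup P e"
    using length_flat_le[OF assms(2)] is_comp_flat[of e] assms(2)
    by (intro quasisymD(2)[OF assms(1)]) (simp_all add: keys_exp_of_comp flat_exp_of_comp)
  moreover have "lookup P e = 0" if "flat e \<notin> G"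
    using that assms(3) by (auto simp: G_def in_keys_iff)
  ultimately show ?thesis
    by (simp add: lookup_minus)
qed

definition shapes_below :: "nat list \<Rightarrow> ipoly \<Rightarrow> nat list set" where
  "shapes_below \<mu> P = {q. is_comp q \<and> sum_list q \<le> sum_list \<mu> \<and>
      (\<exists>e. lookup P e \<noteq> 0 \<and> dominates (partition_of (flat e)) q)}"

lemma finite_shapes_below: "finite (shapes_below \<mu> P)"
  by (rule finite_subset[OF _ finite_comps_sum_le[of "sum_list \<mu>"]]) (auto simp: shapes_below_def)

lemma lookup_diff_lincomb_nonzeroD:
  assumes "lookup (P - (\<Sum>\<gamma>\<in>A. of_int (c \<gamma>) * Q \<gamma>)) e \<noteq> 0"
  shows "lookup P e \<noteq> 0 \<or> (\<exists>\<gamma>\<in>A. lookup (Q \<gamma> :: ipoly) e \<noteq> 0)"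
  using assms lookup_lincomb_nonzeroD[where A=A and e=e] by (force simp: lookup_minus)

lemma shapes_below_diff_subset:
  assumes "G \<subseteq> flat ` keys P"
  shows "shapes_below \<mu> (P - (\<Sum>\<gamma>\<in>G. of_int (a \<gamma>) * qschur n \<gamma>)) \<subseteq> shapes_below \<mu> P"
proof
  fix q assume "q \<in> shapes_below \<mu> (P - (\<Sum>\<gamma>\<in>G. of_int (a \<gamma>) * qschur n \<gamma>))"
  then obtain e where q: "is_comp q" "sum_list q \<le> sum_list \<mu>" "dominates (partition_of (flat e)) q"
      and "lookup (P - (\<Sum>\<gamma>\<in>G. of_int (a \<gamma>) * qschur n \<gamma>)) e \<noteq> 0"
    by (auto simp: shapes_below_def)
  from lookup_diff_lincomb_nonzeroD[OF this(4)]
  obtain e' where "lookup P e' \<noteq> 0" "dominates (partition_of (flat e')) q"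
  proof
    assume "\<exists>\<gamma>\<in>G. lookup (qschur n \<gamma>) e \<noteq> 0"
    then obtain \<gamma> where "\<gamma> \<in> G" "lookup (qschur n \<gamma>) e \<noteq> 0" by blast
    moreover obtain e' where "lookup P e' \<noteq> 0" "flat e' = \<gamma>"
      using assms \<open>\<gamma> \<in> G\<close> by (auto simp: in_keys_iff)
    ultimately show thesis
      using that dominates_flat_if_lookup_qschur dominates_trans q(3) by blast
  qed (use q(3) in blast)
  then show "q \<in> shapes_below \<mu> P" using q(1,2) by (auto simp: shapes_below_def)
qed

text \<open>After removing the terms of a maximal shape \<open>m\<close> occurring in \<open>P\<close>, no monomial of shape
  dominating \<open>m\<close> is left: shape exactly \<open>m\<close> is cancelled, a strictly larger shape in \<open>P\<close> would
  contradict maximality, and the subtracted \<open>S\<^sub>\<gamma>\<close> only have shapes dominated by \<open>m\<close>.\<close>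

lemma leading_shape_notin_shapes_below_diff:
  assumes qs: "quasisym n P" and g: "g \<in> flat ` keys P" "\<forall>\<gamma>\<in>flat ` keys P. \<not> strictly_below g \<gamma>"
  defines "G \<equiv> {\<gamma> \<in> flat ` keys P. partition_of \<gamma> = partition_of g}"
  shows "partition_of g \<notin> shapes_below \<mu> (P - (\<Sum>\<gamma>\<in>G. of_int (lookup P (exp_of_comp \<gamma>)) * qschur n \<gamma>))"
    (is "_ \<notin> shapes_below \<mu> ?P'")
proof
  assume "partition_of g \<in> shapes_below \<mu> ?P'"
  then obtain e where e: "lookup ?P' e \<noteq> 0" "dominates (partition_of (flat e)) (partition_of g)"
    by (auto simp: shapes_below_def)
  have "is_comp g" using g(1) is_comp_flat by auto
  have "partition_of (flat e) \<noteq> partition_of g"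
  proof
    assume shape: "partition_of (flat e) = partition_of g"
    have "keys e \<subseteq> {1..n}"
      using lookup_diff_lincomb_nonzeroD[OF e(1)] quasisymD(1)[OF qs] quasisymD(1)[OF quasisym_qschur]
      by blast
    then have "lookup ?P' e = 0"
      unfolding G_def by (rule lookup_diff_leading_terms[OF qs _ shape])
    then show False using e(1) by simp
  qed
  from lookup_diff_lincomb_nonzeroD[OF e(1)] show False
  proof
    assume "lookup P e \<noteq> 0"
    then have "flat e \<in> flat ` keys P" by (auto simp: in_keys_iff)
    moreover have "strictly_below g (flat e)"
      using e(2) \<open>partition_of (flat e) \<noteq> partition_of g\<close> \<open>is_comp g\<close> is_comp_flat
      by (simp add: strictly_below_def)
    ultimately show False using g(2) by blast
  next
    assume "\<exists>\<gamma>\<in>G. lookup (qschur n \<gamma>) e \<noteq> 0"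
    then obtain \<gamma> where "\<gamma> \<in> G" "lookup (qschur n \<gamma>) e \<noteq> 0" by blast
    then have "dominates (partition_of \<gamma>) (partition_of (flat e))" "partition_of \<gamma> = partition_of g"
      using dominates_flat_if_lookup_qschur[of n \<gamma> e] by (simp_all add: G_def)
    then have "dominates (partition_of g) (partition_of (flat e))"
      by simp
    then have "partition_of (flat e) = partition_of g"
      using dominates_antisym[OF is_comp_partition_of[OF is_comp_flat] _ e(2)]
        is_comp_partition_of[OF \<open>is_comp g\<close>] by simp
    then show False using \<open>partition_of (flat e) \<noteq> partition_of g\<close> by simp
  qed
qed

lemma qschur_expansion_step:
  assumes qs: "quasisym n P" and "P \<noteq> 0"
    and bound: "\<And>e. lookup P e \<noteq> 0 \<Longrightarrow> dominates \<mu> (partition_of (flat e))"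
  obtains G a where "finite G" "\<And>\<gamma>. \<gamma> \<in> G \<Longrightarrow> is_comp \<gamma> \<and> length \<gamma> \<le> n \<and> dominates \<mu> (partition_of \<gamma>)"
    "shapes_below \<mu> (P - (\<Sum>\<gamma>\<in>G. of_int (a \<gamma>) * qschur n \<gamma>)) \<subset> shapes_below \<mu> P"
proof -
  define F where "F = flat ` keys P"
  have F_comp: "is_comp \<gamma> \<and> length \<gamma> \<le> n \<and> dominates \<mu> (partition_of \<gamma>)" if "\<gamma> \<in> F" for \<gamma>
    using that is_comp_flat length_flat_le quasisymD(1)[OF qs] bound by (auto simp: F_def in_keys_iff)
  have "finite F" "F \<noteq> {}"
    using \<open>P \<noteq> 0\<close> by (simp_all add: F_def)
  then obtain g where g: "g \<in> F" "\<forall>\<gamma>\<in>F. \<not> strictly_below g \<gamma>"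
    by (rule ex_maximal_strictly_below)
  define G where "G = {\<gamma> \<in> F. partition_of \<gamma> = partition_of g}"
  define a where "a \<gamma> = lookup P (exp_of_comp \<gamma>)" for \<gamma>
  have "partition_of g \<in> shapes_below \<mu> P"
  proof -
    obtain e where "lookup P e \<noteq> 0" "flat e = g" using g(1) by (auto simp: F_def in_keys_iff)
    moreover have "sum_list (partition_of g) \<le> sum_list \<mu>"
      using F_comp[OF g(1)] dominates_sum_list_le by blast
    ultimately show ?thesis
      using F_comp[OF g(1)] is_comp_partition_of dominates_refl by (auto simp: shapes_below_def)
  qed
  moreover have "partition_of g \<notin> shapes_below \<mu> (P - (\<Sum>\<gamma>\<in>G. of_int (a \<gamma>) * qschur n \<gamma>))"
    using leading_shape_notin_shapes_below_diff[OF qs g[unfolded F_def]]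
    by (simp add: G_def F_def a_def)
  moreover have "shapes_below \<mu> (P - (\<Sum>\<gamma>\<in>G. of_int (a \<gamma>) * qschur n \<gamma>)) \<subseteq> shapes_below \<mu> P"
    by (rule shapes_below_diff_subset) (auto simp: G_def F_def)
  moreover have "finite G" using \<open>finite F\<close> by (simp add: G_def)
  moreover have "is_comp \<gamma> \<and> length \<gamma> \<le> n \<and> dominates \<mu> (partition_of \<gamma>)" if "\<gamma> \<in> G" for \<gamma>
    using F_comp that unfolding G_def by blast
  ultimately show ?thesis
    using that by blast
qed

lemma qschur_expansion_add:
  assumes c: "qschur_expansion n P c" and "finite G" "\<And>\<gamma>. \<gamma> \<in> G \<Longrightarrow> is_comp \<gamma> \<and> length \<gamma> \<le> n"
  shows "qschur_expansion n (P + (\<Sum>\<gamma>\<in>G. of_int (a \<gamma>) * qschur n \<gamma>)) (\<lambda>\<gamma>. c \<gamma> + (if \<gamma> \<in> G then a \<gamma> else 0))"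
proof -
  define c' where "c' \<gamma> = c \<gamma> + (if \<gamma> \<in> G then a \<gamma> else 0)" for \<gamma>
  define B where "B = {\<gamma>. c \<gamma> \<noteq> 0} \<union> G"
  have "finite B" using c \<open>finite G\<close> by (simp add: B_def qschur_expansion_def)
  have supp: "{\<gamma>. c' \<gamma> \<noteq> 0} \<subseteq> B" by (auto simp: c'_def B_def split: if_splits)
  have "(\<Sum>\<gamma>\<in>{\<gamma>. c' \<gamma> \<noteq> 0}. of_int (c' \<gamma>) * qschur n \<gamma>) = (\<Sum>\<gamma>\<in>B. of_int (c' \<gamma>) * qschur n \<gamma>)"
    by (rule sum.mono_neutral_left[OF \<open>finite B\<close> supp]) auto
  also have "\<dots> = (\<Sum>\<gamma>\<in>B. of_int (c \<gamma>) * qschur n \<gamma>) +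
      (\<Sum>\<gamma>\<in>B. of_int (if \<gamma> \<in> G then a \<gamma> else 0) * qschur n \<gamma>)"
    by (simp add: c'_def distrib_right sum.distrib)
  also have "(\<Sum>\<gamma>\<in>B. of_int (c \<gamma>) * qschur n \<gamma>) = P"
    using qschur_expansion_sum_superset[OF c \<open>finite B\<close>] by (auto simp: B_def)
  also have "(\<Sum>\<gamma>\<in>B. of_int (if \<gamma> \<in> G then a \<gamma> else 0) * qschur n \<gamma>) =
      (\<Sum>\<gamma>\<in>G. of_int (a \<gamma>) * qschur n \<gamma>)"
    by (subst sum.mono_neutral_right[OF \<open>finite B\<close>, of G]) (auto simp: B_def)
  finally have "P + (\<Sum>\<gamma>\<in>G. of_int (a \<gamma>) * qschur n \<gamma>) =
      (\<Sum>\<gamma>\<in>{\<gamma>. c' \<gamma> \<noteq> 0}. of_int (c' \<gamma>) * qschur n \<gamma>)" ..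
  moreover have "is_comp \<gamma> \<and> length \<gamma> \<le> n" if "c' \<gamma> \<noteq> 0" for \<gamma>
    using that c assms(3) by (auto simp: c'_def qschur_expansion_def split: if_splits)
  ultimately show ?thesis
    using finite_subset[OF supp \<open>finite B\<close>] by (simp add: qschur_expansion_def c'_def)
qed

lemma qschur_expansion_exists:
  assumes "quasisym n P" "\<And>e. lookup P e \<noteq> 0 \<Longrightarrow> dominates \<mu> (partition_of (flat e))"
  shows "\<exists>c. qschur_expansion n P c \<and> (\<forall>\<gamma>. c \<gamma> \<noteq> 0 \<longrightarrow> dominates \<mu> (partition_of \<gamma>))"
  using assms
proof (induction "card (shapes_below \<mu> P)" arbitrary: P rule: less_induct)
  case less
  show ?case
  proof (cases "P = 0")
    case True
    then have "qschur_expansion n P (\<lambda>_. 0)" by (simp add: qschur_expansion_def)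
    then show ?thesis by auto
  next
    case False
    obtain G a where G: "finite G" "\<And>\<gamma>. \<gamma> \<in> G \<Longrightarrow> is_comp \<gamma> \<and> length \<gamma> \<le> n \<and> dominates \<mu> (partition_of \<gamma>)"
      and shrink: "shapes_below \<mu> (P - (\<Sum>\<gamma>\<in>G. of_int (a \<gamma>) * qschur n \<gamma>)) \<subset> shapes_below \<mu> P"
      using qschur_expansion_step[OF less.prems(1) False less.prems(2)] by blast
    define Q where "Q = (\<Sum>\<gamma>\<in>G. of_int (a \<gamma>) * qschur n \<gamma>)"
    have "quasisym n (P - Q)"
      unfolding Q_def by (intro quasisym_diff less.prems(1) quasisym_lincomb quasisym_qschur)
    moreover have "dominates \<mu> (partition_of (flat e))" if "lookup (P - Q) e \<noteq> 0" for e
    proof -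
      have "lookup P e \<noteq> 0 \<or> (\<exists>\<gamma>\<in>G. lookup (qschur n \<gamma>) e \<noteq> 0)"
        using that lookup_diff_lincomb_nonzeroD by (simp add: Q_def)
      then show ?thesis
        using less.prems(2) G(2) dominates_flat_if_lookup_qschur dominates_trans by blast
    qed
    moreover have "card (shapes_below \<mu> (P - Q)) < card (shapes_below \<mu> P)"
      using shrink by (simp add: Q_def psubset_card_mono finite_shapes_below)
    ultimately obtain c where c: "qschur_expansion n (P - Q) c" "\<forall>\<gamma>. c \<gamma> \<noteq> 0 \<longrightarrow> dominates \<mu> (partition_of \<gamma>)"
      using less.hyps by blast
    have "qschur_expansion n P (\<lambda>\<gamma>. c \<gamma> + (if \<gamma> \<in> G then a \<gamma> else 0))"
      using qschur_expansion_add[OF c(1) G(1), of a] G(2) by (simp add: Q_def)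
    moreover have "dominates \<mu> (partition_of \<gamma>)" if "c \<gamma> + (if \<gamma> \<in> G then a \<gamma> else 0) \<noteq> 0" for \<gamma>
      using that c(2) G(2) by (auto split: if_splits)
    ultimately show ?thesis by blast
  qed
qed

lemma dominates_phi_if_lookup_schur_mult_qschur:
  assumes "is_partition lam" "lookup (schur n lam * qschur n \<beta>) e \<noteq> 0"
  shows "dominates (partition_of (phi lam \<beta>)) (partition_of (flat e))"
  unfolding dominates_def
proof
  fix k
  obtain T1 T2 where "ssyt n lam T1" "comp_tableau n \<beta> T2" "e = content lam T1 + content \<beta> T2"
    using assms(2) by (auto simp: lookup_schur_mult_qschur card_gt_0_iff tableau_pairs_def)
  then have "sum_list (take k (partition_of (flat e))) \<le>
      sum_list (take k lam) + sum_list (take k (partition_of \<beta>))"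
    using sum_take_flat_content_add_le[OF column_injective_ssyt[OF assms(1)] column_injective_comp_tableau]
      partition_of_partition[OF assms(1)] by metis
  also have "\<dots> \<le> sum_list (take k (partition_of (phi lam \<beta>)))"
    by (rule sum_take_phi_ge)
  finally show "sum_list (take k (partition_of (flat e))) \<le> sum_list (take k (partition_of (phi lam \<beta>)))" .
qed

theorem theorem5p5:
  fixes n d :: nat and lam \<beta> \<alpha> :: "nat list"
  assumes "1 \<le> n"
    and "is_partition lam"
    and "\<beta> \<in> Bset n"
    and "length lam \<le> n" and "length \<beta> \<le> n"
    and "sum_list lam + sum_list \<beta> = d"
    and "is_comp \<alpha>" and "sum_list \<alpha> = d" and "length \<alpha> \<le> n"
    and "\<not> dominates (partition_of (phi lam \<beta>)) (partition_of \<alpha>)"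
  shows "lr_coeff n lam \<beta> \<alpha> = 0"
proof -
  obtain c where "qschur_expansion n (schur n lam * qschur n \<beta>) c"
    and "\<forall>\<gamma>. c \<gamma> \<noteq> 0 \<longrightarrow> dominates (partition_of (phi lam \<beta>)) (partition_of \<gamma>)"
    using qschur_expansion_exists[OF quasisym_schur_mult_qschur[of n lam \<beta>]
        dominates_phi_if_lookup_schur_mult_qschur[OF assms(2), of n \<beta>]] by blast
  then show ?thesis
    using lr_coeff_eq assms(10) by metis
qed

end
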